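(* Let $B=(V,E)$ be a simple Bratteli diagram whose dimension group $K^0(V,E)$ with order unit $u=[v^0]$ has rational subgroup $\mathbb Q(K^0(V,E),u)=\mathbb Z u$. Then there exist a telescoping $\tilde B$ of $B$ and a proper ordering on $\tilde B$ such that the associated Bratteli–Vershik system $(X_{\tilde B},T_{\tilde B})$ is weakly mixing.
   Context: A Bratteli diagram $(V,E)$ has vertex set $V=V_0\sqcup V_1\sqcup\cdots$ with $V_0=\{v^0\}$, finite nonempty $V_k$, and edge set $E=E_1\sqcup E_2\sqcup\cdots$ with $E_k$ finite, source map $s(E_k)\subseteq V_{k-1}$ and range map $r(E_k)\subseteq V_k$; $A_k$ is the $|V_k|\times|V_{k-1}|$ incidence matrix counting edges. Telescoping along $0=n_0<n_1<\cdots$ keeps only levels $V_{n_k}$, with edges between consecutive kept levels being the finite paths between them. The diagram is simple if some telescoping has all incidence matrices strictly positive. Its dimension group $K^0(V,E)$ is the direct limit of $\mathbb Z^{V_0}\xrightarrow{A_1}\mathbb Z^{V_1}\xrightarrow{A_2}\cdots$ with positive cone the union of images of $\mathbb Z_+^{V_k}$, and order unit $u=[v^0]$ the class of $1\in\mathbb Z^{V_0}$. For a partially ordered group $G$ with order unit $u$, the rational subgroup is $\mathbb Q(G,u)=\{g\in G: pg=nu\text{ for some nonzero } p\in\mathbb Z \text{ and some } n\in\mathbb Z\}$. An ordering on $(V,E)$ is a linear order on each $r^{-1}(v)$, $v\in V\setminus V_0$; it induces an order on finite paths between levels (compare the last differing edge). $X_B$ is the space of infinite paths $(e_1,e_2,\dots)$,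 $e_i\in E_i$, $r(e_i)=s(e_{i+1})$, with the topology generated by cylinder sets. The ordering is proper if the diagram is simple and there is a unique path of all maximal edges $x_{\max}$ and a unique path of all minimal edges $x_{\min}$. The Vershik map $T_B$ sends $x_{\max}$ to $x_{\min}$ and any other path $(e_1,e_2,\dots)$, with $k$ least such that $e_k$ is not maximal, to $(f_1,\dots,f_{k-1},f_k,e_{k+1},\dots)$ where $f_k$ is the successor of $e_k$ and $(f_1,\dots,f_{k-1})$ is the minimal path from $v^0$ to $s(f_k)$. A system $(X,T)$ is weakly mixing if $(X\times X,T\times T)$ is topologically transitive. *)

theory Defs
  imports "HOL-Analysis.Analysis"
begin

text \<open>Level-indexed data: V k is the vertex set of level k; E k (k \<ge> 1) the edge set of
level k; bs k e and br k e are source (in V (k-1)) and range (in V k) of an edge e of level k.\<close>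

record ('v, 'e) bdiag =
  bV :: "nat \<Rightarrow> 'v set"
  bE :: "nat \<Rightarrow> 'e set"
  bs :: "nat \<Rightarrow> 'e \<Rightarrow> 'v"
  br :: "nat \<Rightarrow> 'e \<Rightarrow> 'v"

definition bratteli :: "('v, 'e) bdiag \<Rightarrow> bool" where
  "bratteli B \<longleftrightarrow>
     (\<exists>v0. bV B 0 = {v0}) \<and>
     (\<forall>k. finite (bV B k) \<and> bV B k \<noteq> {}) \<and>
     bE B 0 = {} \<and>
     (\<forall>k. finite (bE B k)) \<and>
     (\<forall>k. \<forall>e\<in>bE B (Suc k). bs B (Suc k) e \<in> bV B k \<and> br B (Suc k) e \<in> bV B (Suc k))"

text \<open>Finite paths from level m to level n (m < n): lists [e_(m+1), ..., e_n].\<close>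

definition fpath :: "('v, 'e) bdiag \<Rightarrow> nat \<Rightarrow> nat \<Rightarrow> 'e list \<Rightarrow> bool" where
  "fpath B m n p \<longleftrightarrow> m < n \<and> length p = n - m \<and>
     (\<forall>i < n - m. p ! i \<in> bE B (Suc (m + i))) \<and>
     (\<forall>i. Suc i < n - m \<longrightarrow> br B (Suc (m + i)) (p ! i) = bs B (Suc (Suc (m + i))) (p ! Suc i))"

definition telescope :: "('v, 'e) bdiag \<Rightarrow> (nat \<Rightarrow> nat) \<Rightarrow> ('v, 'e list) bdiag" where
  "telescope B n = \<lparr> bV = (\<lambda>k. bV B (n k)),
     bE = (\<lambda>k. case k of 0 \<Rightarrow> {} | Suc j \<Rightarrow> {p. fpath B (n j) (n (Suc j)) p}),
     bs = (\<lambda>k p. case k of 0 \<Rightarrow> undefined | Suc j \<Rightarrow> bs B (Suc (n j)) (hd p)),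
     br = (\<lambda>k p. case k of 0 \<Rightarrow> undefined | Suc j \<Rightarrow> br B (n (Suc j)) (last p)) \<rparr>"

definition is_telescoping_seq :: "(nat \<Rightarrow> nat) \<Rightarrow> bool" where
  "is_telescoping_seq n \<longleftrightarrow> n 0 = 0 \<and> strict_mono n"

definition positive_incidence :: "('v, 'e) bdiag \<Rightarrow> bool" where
  "positive_incidence B \<longleftrightarrow>
     (\<forall>k. \<forall>v\<in>bV B k. \<forall>w\<in>bV B (Suc k).
        \<exists>e\<in>bE B (Suc k). bs B (Suc k) e = v \<and> br B (Suc k) e = w)"

definition simple_bratteli :: "('v, 'e) bdiag \<Rightarrow> bool" where
  "simple_bratteli B \<longleftrightarrow> bratteli B \<and>
     (\<exists>n. is_telescoping_seq n \<and> positive_incidence (telescope B n))"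

text \<open>push B k m a: image of a \<in> Z^(V_k) in Z^(V_m) under A_m \<circ> ... \<circ> A_(k+1), for m \<ge> k;
  (A_j a)(w) = sum over edges e of level j with range w of a(source e).\<close>

fun push :: "('v, 'e) bdiag \<Rightarrow> nat \<Rightarrow> nat \<Rightarrow> ('v \<Rightarrow> int) \<Rightarrow> 'v \<Rightarrow> int" where
  "push B k 0 a = a"
| "push B k (Suc m) a =
     (if Suc m \<le> k then a
      else (\<lambda>w. \<Sum>e\<in>{e\<in>bE B (Suc m). br B (Suc m) e = w}. push B k m a (bs B (Suc m) e)))"

text \<open>Two representatives (k,a), (l,b) define the same element of the direct limit.\<close>

definition dim_eq :: "('v, 'e) bdiag \<Rightarrow> nat \<Rightarrow> ('v \<Rightarrow> int) \<Rightarrow> nat \<Rightarrow> ('v \<Rightarrow> int) \<Rightarrow> bool" where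
  "dim_eq B k a l b \<longleftrightarrow> (\<exists>m \<ge> max k l. \<forall>w\<in>bV B m. push B k m a w = push B l m b w)"

definition dim_class :: "('v, 'e) bdiag \<Rightarrow> nat \<Rightarrow> ('v \<Rightarrow> int) \<Rightarrow> (nat \<times> ('v \<Rightarrow> int)) set" where
  "dim_class B k a = {(l, b). dim_eq B k a l b}"

text \<open>The dimension group K^0(V,E) as set of classes; the order unit [v^0] is the class of 1 at level 0.\<close>

definition K0 :: "('v, 'e) bdiag \<Rightarrow> (nat \<times> ('v \<Rightarrow> int)) set set" where
  "K0 B = {dim_class B k a | k a. True}"

definition order_unit :: "('v, 'e) bdiag \<Rightarrow> (nat \<times> ('v \<Rightarrow> int)) set" where
  "order_unit B = dim_class B 0 (\<lambda>_. 1)"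

text \<open>Rational subgroup: classes g with p g = n u for some p \<noteq> 0, n \<in> Z.
  (Integer multiples are computed on representatives.)\<close>

definition rational_subgroup :: "('v, 'e) bdiag \<Rightarrow> (nat \<times> ('v \<Rightarrow> int)) set set" where
  "rational_subgroup B = {dim_class B k a | k a.
      \<exists>p n. p \<noteq> (0::int) \<and> dim_class B k (\<lambda>v. p * a v) = dim_class B 0 (\<lambda>_. n)}"

definition int_multiples_of_unit :: "('v, 'e) bdiag \<Rightarrow> (nat \<times> ('v \<Rightarrow> int)) set set" where
  "int_multiples_of_unit B = {dim_class B 0 (\<lambda>_. n) | n. True}"

definition fibre :: "('v, 'e) bdiag \<Rightarrow> nat \<Rightarrow> 'v \<Rightarrow> 'e set" where
  "fibre B k v = {e \<in> bE B k. br B k e = v}"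

definition ordering :: "('v, 'e) bdiag \<Rightarrow> (nat \<Rightarrow> 'e rel) \<Rightarrow> bool" where
  "ordering B om \<longleftrightarrow> (\<forall>k. \<forall>v\<in>bV B (Suc k).
      linear_order_on (fibre B (Suc k) v) (om (Suc k) \<inter> (fibre B (Suc k) v \<times> fibre B (Suc k) v)))"

definition is_max_edge :: "('v, 'e) bdiag \<Rightarrow> (nat \<Rightarrow> 'e rel) \<Rightarrow> nat \<Rightarrow> 'e \<Rightarrow> bool" where
  "is_max_edge B om k e \<longleftrightarrow> (\<forall>e'\<in>fibre B k (br B k e). (e', e) \<in> om k)"

definition is_min_edge :: "('v, 'e) bdiag \<Rightarrow> (nat \<Rightarrow> 'e rel) \<Rightarrow> nat \<Rightarrow> 'e \<Rightarrow> bool" where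
  "is_min_edge B om k e \<longleftrightarrow> (\<forall>e'\<in>fibre B k (br B k e). (e, e') \<in> om k)"

text \<open>Infinite paths: x i is the edge of level i+1.\<close>

definition path_space :: "('v, 'e) bdiag \<Rightarrow> (nat \<Rightarrow> 'e) set" where
  "path_space B = {x. (\<forall>i. x i \<in> bE B (Suc i)) \<and>
      (\<forall>i. br B (Suc i) (x i) = bs B (Suc (Suc i)) (x (Suc i)))}"

definition cylinder :: "('v, 'e) bdiag \<Rightarrow> 'e list \<Rightarrow> (nat \<Rightarrow> 'e) set" where
  "cylinder B p = {x \<in> path_space B. \<forall>i < length p. x i = p ! i}"

definition path_topology :: "('v, 'e) bdiag \<Rightarrow> (nat \<Rightarrow> 'e) topology" where
  "path_topology B = topology_generated_by (range (cylinder B))"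

definition max_path :: "('v, 'e) bdiag \<Rightarrow> (nat \<Rightarrow> 'e rel) \<Rightarrow> (nat \<Rightarrow> 'e) \<Rightarrow> bool" where
  "max_path B om x \<longleftrightarrow> x \<in> path_space B \<and> (\<forall>i. is_max_edge B om (Suc i) (x i))"

definition min_path :: "('v, 'e) bdiag \<Rightarrow> (nat \<Rightarrow> 'e rel) \<Rightarrow> (nat \<Rightarrow> 'e) \<Rightarrow> bool" where
  "min_path B om x \<longleftrightarrow> x \<in> path_space B \<and> (\<forall>i. is_min_edge B om (Suc i) (x i))"

definition proper_ordering :: "('v, 'e) bdiag \<Rightarrow> (nat \<Rightarrow> 'e rel) \<Rightarrow> bool" where
  "proper_ordering B om \<longleftrightarrow> simple_bratteli B \<and> ordering B om \<and>
      (\<exists>!x. max_path B om x) \<and> (\<exists>!x. min_path B om x)"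

definition min_edge_into :: "('v, 'e) bdiag \<Rightarrow> (nat \<Rightarrow> 'e rel) \<Rightarrow> nat \<Rightarrow> 'v \<Rightarrow> 'e" where
  "min_edge_into B om k w = (THE e. e \<in> fibre B k w \<and> (\<forall>e'\<in>fibre B k w. (e, e') \<in> om k))"

fun min_fpath :: "('v, 'e) bdiag \<Rightarrow> (nat \<Rightarrow> 'e rel) \<Rightarrow> nat \<Rightarrow> 'v \<Rightarrow> 'e list" where
  "min_fpath B om 0 w = []"
| "min_fpath B om (Suc k) w =
     (let e = min_edge_into B om (Suc k) w in min_fpath B om k (bs B (Suc k) e) @ [e])"

definition succ_edge :: "('v, 'e) bdiag \<Rightarrow> (nat \<Rightarrow> 'e rel) \<Rightarrow> nat \<Rightarrow> 'e \<Rightarrow> 'e" where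
  "succ_edge B om k e = (THE f. f \<in> fibre B k (br B k e) \<and> f \<noteq> e \<and> (e, f) \<in> om k \<and>
      (\<forall>g\<in>fibre B k (br B k e). g \<noteq> e \<and> (e, g) \<in> om k \<longrightarrow> (f, g) \<in> om k))"

definition vershik :: "('v, 'e) bdiag \<Rightarrow> (nat \<Rightarrow> 'e rel) \<Rightarrow> (nat \<Rightarrow> 'e) \<Rightarrow> (nat \<Rightarrow> 'e)" where
  "vershik B om x =
     (if max_path B om x then (THE y. min_path B om y)
      else (let j = (LEAST i. \<not> is_max_edge B om (Suc i) (x i));
                f = succ_edge B om (Suc j) (x j);
                q = min_fpath B om j (bs B (Suc j) f)
            in (\<lambda>i. if i < j then q ! i else if i = j then f else x i)))"

definition top_transitive :: "'a topology \<Rightarrow> ('a \<Rightarrow> 'a) \<Rightarrow> bool" where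
  "top_transitive X T \<longleftrightarrow> (\<forall>U W. openin X U \<and> openin X W \<and> U \<noteq> {} \<and> W \<noteq> {} \<longrightarrow>
      (\<exists>n>0. (T ^^ n) ` U \<inter> W \<noteq> {}))"

definition weakly_mixing :: "'a topology \<Rightarrow> ('a \<Rightarrow> 'a) \<Rightarrow> bool" where
  "weakly_mixing X T \<longleftrightarrow> top_transitive (prod_topology X X) (\<lambda>(x, y). (T x, T y))"

end

theory Submission
  imports Defs
begin

text \<open>Telescope until every vertex of a level is joined to every vertex of the next, and list
  each fibre so that its first and last edges start at a fixed vertex c: the ordering is proper,
  and the Vershik map moves a path one step up the Kakutani-Rokhlin tower it lies in.
  The hypothesis on the rational subgroup says that at every level the tower heights have gcd 1;
  unless they are all 1 (then the path space is a point) they also grow without bound. By the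
  Frobenius coin problem every large number is a nonnegative combination of heights, so after
  telescoping sparsely enough each fibre can be listed with a pattern of edges whose offsets
  realise every gap in a window wider than four tower heights. Two pairs of points are then
  spliced into one fibre at a deep level so that a single power of the Vershik map carries both
  points of the first pair to those of the second: T \<times> T is topologically transitive.\<close>

section \<open>Dimension group\<close>

definition delta :: "'v \<Rightarrow> 'v \<Rightarrow> int" where
  "delta u = (\<lambda>v. if v = u then 1 else 0)"

lemma delta_nonneg: "0 \<le> delta u v"
  unfolding delta_def by simp

lemma delta_le: "1 \<le> f y \<Longrightarrow> 0 \<le> f v \<Longrightarrow> delta y v \<le> f v"
  unfolding delta_def by simp

lemma sum_mult_delta: "finite S \<Longrightarrow> v \<in> S \<Longrightarrow> (\<Sum>y\<in>S. f y * delta y v) = f v"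
  unfolding delta_def by (simp add: if_distrib sum.delta cong: if_cong)

locale bratteli_diagram =
  fixes B :: "('v, 'e) bdiag"
  assumes bratteli: "bratteli B"
begin

lemma finite_level: "finite (bV B k)"
  and level_nonempty: "bV B k \<noteq> {}"
  and finite_edges: "finite (bE B k)"
  and source_in_level: "e \<in> bE B (Suc k) \<Longrightarrow> bs B (Suc k) e \<in> bV B k"
  and range_in_level: "e \<in> bE B (Suc k) \<Longrightarrow> br B (Suc k) e \<in> bV B (Suc k)"
  using bratteli unfolding bratteli_def by auto

lemma finite_fibre: "finite (fibre B k v)"
  unfolding fibre_def using finite_edges by simp

lemma push_le: "m \<le> k \<Longrightarrow> push B k m a = a"
  by (induction m) auto

lemma push_same [simp]: "push B k k a = a"
  by (rule push_le) simp

lemma push_Suc: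
  "k \<le> m \<Longrightarrow> push B k (Suc m) a w = (\<Sum>e\<in>fibre B (Suc m) w. push B k m a (bs B (Suc m) e))"
  by (simp add: fibre_def)

lemma push_cong:
  assumes "k \<le> m" "\<forall>v\<in>bV B k. a v = b v" "w \<in> bV B m"
  shows "push B k m a w = push B k m b w"
  using assms(1,3)
proof (induction m arbitrary: w)
  case (Suc m)
  show ?case
  proof (cases "Suc m = k")
    case False
    then have "k \<le> m" using Suc.prems by simp
    then show ?thesis unfolding push_Suc[OF \<open>k \<le> m\<close>]
      by (intro sum.cong) (auto simp: fibre_def intro!: Suc.IH source_in_level)
  qed (use assms(2) Suc.prems in auto)
qed (use assms(2) in simp)

lemma push_push:
  assumes "k \<le> l" "l \<le> m" "w \<in> bV B m"
  shows "push B l m (push B k l a) w = push B k m a w"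
  using assms(2,3)
proof (induction m arbitrary: w)
  case (Suc m)
  show ?case
  proof (cases "l = Suc m")
    case False
    then have "l \<le> m" "k \<le> m" using Suc.prems assms(1) by auto
    then show ?thesis unfolding push_Suc[OF \<open>k \<le> m\<close>] push_Suc[OF \<open>l \<le> m\<close>]
      by (intro sum.cong) (auto simp: fibre_def intro!: Suc.IH source_in_level)
  qed simp
qed (use assms(1) in simp)

lemma push_smult: "push B k m (\<lambda>v. c * a v) w = c * push B k m a w"
  by (induction m arbitrary: w) (simp_all add: sum_distrib_left)

lemma push_zero [simp]: "push B k m (\<lambda>_. 0) w = 0"
  by (induction m arbitrary: w) simp_all

lemma push_sum:
  "finite S \<Longrightarrow> push B k m (\<lambda>v. \<Sum>u\<in>S. f u v) w = (\<Sum>u\<in>S. push B k m (f u) w)"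
  by (induction m arbitrary: w) (simp_all add: sum.swap[of _ S])

lemma push_mono:
  assumes "k \<le> m" "\<forall>v\<in>bV B k. a v \<le> b v" "w \<in> bV B m"
  shows "push B k m a w \<le> push B k m b w"
  using assms(1,3)
proof (induction m arbitrary: w)
  case (Suc m)
  show ?case
  proof (cases "Suc m = k")
    case False
    then have "k \<le> m" using Suc.prems by simp
    then show ?thesis unfolding push_Suc[OF \<open>k \<le> m\<close>]
      by (intro sum_mono) (auto simp: fibre_def intro!: Suc.IH source_in_level)
  qed (use assms(2) Suc.prems in auto)
qed (use assms(2) in simp)

lemma push_nonneg:
  assumes "k \<le> m" "\<forall>v\<in>bV B k. 0 \<le> a v" "w \<in> bV B m"
  shows "0 \<le> push B k m a w"
  using push_mono[OF assms(1) _ assms(3), of "\<lambda>_. 0" a] assms(2) by simp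

lemma push_delta_outside:
  assumes "u \<notin> bV B k" "k \<le> m" "w \<in> bV B m"
  shows "push B k m (delta u) w = 0"
proof -
  have "\<forall>v\<in>bV B k. delta u v = 0"
    using assms(1) by (auto simp: delta_def)
  then show ?thesis
    using push_cong[OF assms(2) _ assms(3), of "delta u" "\<lambda>_. 0"] by simp
qed

definition height :: "nat \<Rightarrow> 'v \<Rightarrow> int" where
  "height l = push B 0 l (\<lambda>_. 1)"

lemma height_push: "k \<le> m \<Longrightarrow> w \<in> bV B m \<Longrightarrow> push B k m (height k) w = height m w"
  unfolding height_def by (rule push_push) simp_all

lemma push_height_decompose:
  assumes "k \<le> m" "w \<in> bV B m"
  shows "height m w = (\<Sum>y\<in>bV B k. height k y * push B k m (delta y) w)"
proof -
  have "height m w = push B k m (height k) w"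
    using height_push[OF assms] by simp
  also have "\<dots> = push B k m (\<lambda>v. \<Sum>y\<in>bV B k. height k y * delta y v) w"
    using assms finite_level by (intro push_cong) (simp_all add: sum_mult_delta)
  also have "\<dots> = (\<Sum>y\<in>bV B k. height k y * push B k m (delta y) w)"
    using finite_level by (simp add: push_sum push_smult)
  finally show ?thesis .
qed

lemma dim_eq_refl: "dim_eq B k a k a"
  unfolding dim_eq_def by auto

lemma dim_eq_sym: "dim_eq B k a l b \<Longrightarrow> dim_eq B l b k a"
  unfolding dim_eq_def by (metis max.commute)

lemma dim_eq_push:
  assumes "dim_eq B k a l b"
  obtains m where "max k l \<le> m" "\<And>m' w. m \<le> m' \<Longrightarrow> w \<in> bV B m' \<Longrightarrow> push B k m' a w = push B l m' b w"
proof -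
  obtain m where m: "max k l \<le> m" "\<forall>w\<in>bV B m. push B k m a w = push B l m b w"
    using assms unfolding dim_eq_def by blast
  have "push B k m' a w = push B l m' b w" if "m \<le> m'" "w \<in> bV B m'" for m' w
  proof -
    have "push B k m' a w = push B m m' (push B k m a) w"
      using m that by (simp add: push_push)
    also have "\<dots> = push B m m' (push B l m b) w"
      using m that by (intro push_cong) auto
    also have "\<dots> = push B l m' b w"
      using m that by (simp add: push_push)
    finally show ?thesis .
  qed
  then show thesis using m(1) that by blast
qed

lemma dim_eq_trans:
  assumes "dim_eq B k a l b" "dim_eq B l b j c"
  shows "dim_eq B k a j c"
proof -
  obtain m1 where m1: "max k l \<le> m1"
    "\<And>m' w. m1 \<le> m' \<Longrightarrow> w \<in> bV B m' \<Longrightarrow> push B k m' a w = push B l m' b w"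
    using dim_eq_push[OF assms(1)] by blast
  obtain m2 where m2: "max l j \<le> m2"
    "\<And>m' w. m2 \<le> m' \<Longrightarrow> w \<in> bV B m' \<Longrightarrow> push B l m' b w = push B j m' c w"
    using dim_eq_push[OF assms(2)] by blast
  show ?thesis
    unfolding dim_eq_def using m1 m2 by (intro exI[of _ "max m1 m2"]) auto
qed

lemma dim_class_eq: "dim_eq B k a l b \<Longrightarrow> dim_class B k a = dim_class B l b"
  unfolding dim_class_def using dim_eq_trans dim_eq_sym by blast

text \<open>If d is the gcd of the heights at level l, the class of height/d is a d-th root of
  the order unit, so it lies in the rational subgroup and is an integer multiple n of the unit;
  hence d n = 1.\<close>

lemma Gcd_height_eq_1:
  assumes rational: "rational_subgroup B = int_multiples_of_unit B"
    and nonzero: "\<And>m. \<exists>m'\<ge>m. \<exists>w\<in>bV B m'. height m' w \<noteq> 0"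
  shows "Gcd (height l ` bV B l) = 1"
proof -
  define d where "d = Gcd (height l ` bV B l)"
  define a where "a = (\<lambda>v. height l v div d)"
  have da: "d * a v = height l v" if "v \<in> bV B l" for v
    using that unfolding a_def d_def by simp
  have "dim_eq B l (\<lambda>v. d * a v) 0 (\<lambda>_. 1)"
    unfolding dim_eq_def using da by (intro exI[of _ l]) (auto simp: height_def)
  then have unit: "dim_class B l (\<lambda>v. d * a v) = dim_class B 0 (\<lambda>_. 1)"
    by (rule dim_class_eq)
  have "d \<noteq> 0"
  proof
    assume "d = 0"
    then have "height l v = 0" if "v \<in> bV B l" for v
      using da[OF that] by simp
    moreover obtain m w where "l \<le> m" "w \<in> bV B m" "height m w \<noteq> 0"
      using nonzero by blast
    ultimately show False
      using height_push[of l m w] push_cong[of l m "height l" "\<lambda>_. 0" w] by simp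
  qed
  then have "dim_class B l a \<in> rational_subgroup B"
    unfolding rational_subgroup_def using unit by blast
  then obtain n where "dim_class B l a = dim_class B 0 (\<lambda>_. n)"
    using rational unfolding int_multiples_of_unit_def by auto
  then have "dim_eq B l a 0 (\<lambda>_. n)"
    using dim_eq_refl unfolding dim_class_def by blast
  then obtain m0 where m0: "\<And>m' w. m0 \<le> m' \<Longrightarrow> w \<in> bV B m' \<Longrightarrow> push B l m' a w = push B 0 m' (\<lambda>_. n) w"
    "l \<le> m0"
    by (rule dim_eq_push) auto
  obtain m w where m: "m0 \<le> m" "w \<in> bV B m" "height m w \<noteq> 0"
    using nonzero by blast
  have "d * n * height m w = d * push B l m a w"
    using m0(1)[OF m(1,2)] push_smult[of 0 m n "\<lambda>_. 1" w] by (simp add: height_def)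
  also have "\<dots> = push B l m (height l) w"
    using m m0(2) da by (simp add: push_smult[symmetric] push_cong)
  also have "\<dots> = height m w"
    using m m0(2) by (simp add: height_push)
  finally have "d * n = 1" using m(3) by simp
  moreover have "0 \<le> d"
    unfolding d_def by simp
  ultimately show ?thesis
    unfolding d_def by (simp add: zmult_eq_1_iff)
qed

section \<open>Finite paths\<close>

lemma fpath_length: "fpath B l l' q \<Longrightarrow> length q = l' - l \<and> l < l'"
  unfolding fpath_def by auto

lemma fpath_nonempty: "fpath B l l' q \<Longrightarrow> q \<noteq> []"
  unfolding fpath_def by auto

lemma fpath_Suc_iff: "fpath B l (Suc l) q \<longleftrightarrow> (\<exists>e. q = [e] \<and> e \<in> bE B (Suc l))"
  unfolding fpath_def by (auto simp: length_Suc_conv)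

lemma fpath_hd: "fpath B l l' q \<Longrightarrow> hd q \<in> bE B (Suc l)"
proof -
  assume q: "fpath B l l' q"
  then have "q \<noteq> []" "0 < l' - l"
    unfolding fpath_def by auto
  then have "q ! 0 \<in> bE B (Suc (l + 0))"
    using q unfolding fpath_def by blast
  then show ?thesis using \<open>q \<noteq> []\<close> by (simp add: hd_conv_nth)
qed

lemma fpath_last: "fpath B l l' q \<Longrightarrow> last q \<in> bE B l'"
proof -
  assume q: "fpath B l l' q"
  then have "q \<noteq> []" "length q = l' - l" "l < l'"
    unfolding fpath_def by auto
  then have "last q = q ! (l' - l - 1)" "l' - l - 1 < l' - l" "Suc (l + (l' - l - 1)) = l'"
    by (auto simp: last_conv_nth)
  then show ?thesis using q unfolding fpath_def by metis
qed

lemma fpath_source: "fpath B l l' q \<Longrightarrow> bs B (Suc l) (hd q) \<in> bV B l"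
  using fpath_hd source_in_level by blast

lemma fpath_range: "fpath B l l' q \<Longrightarrow> br B l' (last q) \<in> bV B l'"
  using fpath_last range_in_level fpath_length by (metis Suc_pred' gr0I less_nat_zero_code)

lemma fpath_snoc_iff:
  assumes "l < l'"
  shows "fpath B l (Suc l') (q @ [e]) \<longleftrightarrow>
    fpath B l l' q \<and> e \<in> bE B (Suc l') \<and> br B l' (last q) = bs B (Suc l') e"
    (is "?lhs \<longleftrightarrow> ?rhs")
proof
  assume lhs: ?lhs
  then have len: "length q = l' - l"
    unfolding fpath_def using assms by (simp add: Suc_diff_le less_imp_le)
  have edge: "(q @ [e]) ! i \<in> bE B (Suc (l + i))" if "i \<le> l' - l" for i
    using lhs that unfolding fpath_def by (simp add: less_Suc_eq_le Suc_diff_le assms less_imp_le)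
  have link: "br B (Suc (l + i)) ((q @ [e]) ! i) = bs B (Suc (Suc (l + i))) ((q @ [e]) ! Suc i)"
    if "i < l' - l" for i
    using lhs that unfolding fpath_def by (simp add: Suc_diff_le assms less_imp_le)
  have "fpath B l l' q"
    unfolding fpath_def
  proof (intro conjI allI impI)
    fix i assume "i < l' - l"
    then show "q ! i \<in> bE B (Suc (l + i))"
      using edge[of i] len by (simp add: nth_append)
  next
    fix i assume "Suc i < l' - l"
    then show "br B (Suc (l + i)) (q ! i) = bs B (Suc (Suc (l + i))) (q ! Suc i)"
      using link[of i] len by (simp add: nth_append)
  qed (use assms len in auto)
  moreover have "e \<in> bE B (Suc l')"
    using edge[of "l' - l"] assms len by (simp add: nth_append)
  moreover have "br B l' (last q) = bs B (Suc l') e"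
  proof -
    have "q \<noteq> []"
      using assms len by auto
    then have "Suc (l + (l' - l - 1)) = l'" "Suc (l' - l - 1) = l' - l" "last q = q ! (l' - l - 1)"
      using assms len by (auto simp: last_conv_nth)
    then show ?thesis
      using link[of "l' - l - 1"] assms len by (simp add: nth_append)
  qed
  ultimately show ?rhs by blast
next
  assume rhs: ?rhs
  then have len: "length q = l' - l"
    unfolding fpath_def by simp
  have "q \<noteq> []"
    using len assms by auto
  then have last_q: "last q = q ! (l' - l - 1)"
    using len by (simp add: last_conv_nth)
  show ?lhs
    unfolding fpath_def
  proof (intro conjI allI impI)
    fix i assume "i < Suc l' - l"
    then consider "i < l' - l" | "i = l' - l" using assms by linarith
    then show "(q @ [e]) ! i \<in> bE B (Suc (l + i))"
      by cases (use rhs len assms in \<open>auto simp: fpath_def nth_append\<close>)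
  next
    fix i assume "Suc i < Suc l' - l"
    then consider "Suc i < l' - l" | "Suc i = l' - l" using assms by linarith
    then show "br B (Suc (l + i)) ((q @ [e]) ! i) = bs B (Suc (Suc (l + i))) ((q @ [e]) ! Suc i)"
    proof cases
      case 2
      then have "Suc (l + i) = l'" "i = l' - l - 1" using assms by auto
      then show ?thesis using rhs len last_q 2 by (auto simp: nth_append)
    qed (use rhs len in \<open>auto simp: fpath_def nth_append\<close>)
  qed (use assms len in auto)
qed

lemma finite_fpaths: "finite {q. fpath B l l' q}"
proof (rule finite_subset)
  show "{q. fpath B l l' q} \<subseteq> {xs. set xs \<subseteq> (\<Union>k\<le>l'. bE B k) \<and> length xs = l' - l}"
  proof safe
    fix q x assume q: "fpath B l l' q" and "x \<in> set q"
    then obtain i where "i < length q" "q ! i = x" by (auto simp: in_set_conv_nth)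
    then have "x \<in> bE B (Suc (l + i))" "Suc (l + i) \<le> l'"
      using q unfolding fpath_def by auto
    then show "x \<in> (\<Union>k\<le>l'. bE B k)" by blast
  qed (auto simp: fpath_def)
  show "finite {xs. set xs \<subseteq> (\<Union>k\<le>l'. bE B k) \<and> length xs = l' - l}"
    by (rule finite_lists_length_eq) (auto simp: finite_edges)
qed

definition paths_into :: "nat \<Rightarrow> nat \<Rightarrow> 'v \<Rightarrow> 'e list set" where
  "paths_into l l' w = {q. fpath B l l' q \<and> br B l' (last q) = w}"

lemma finite_paths_into: "finite (paths_into l l' w)"
  unfolding paths_into_def by (rule finite_subset[OF _ finite_fpaths]) auto

lemma paths_into_Suc:
  assumes "l < l'"
  shows "paths_into l (Suc l') w =
    (\<lambda>(e, q). q @ [e]) ` (SIGMA e:fibre B (Suc l') w. paths_into l l' (bs B (Suc l') e))"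
proof (intro equalityI subsetI)
  fix q assume q: "q \<in> paths_into l (Suc l') w"
  then have "q \<noteq> []" unfolding paths_into_def using fpath_nonempty by blast
  then obtain q' e where "q = q' @ [e]" by (metis rev_exhaust)
  with q show "q \<in> (\<lambda>(e, q). q @ [e]) ` (SIGMA e:fibre B (Suc l') w. paths_into l l' (bs B (Suc l') e))"
    unfolding paths_into_def fibre_def using fpath_snoc_iff[OF assms] by (auto intro!: image_eqI[of _ _ "(e, q')"])
qed (auto simp: paths_into_def fibre_def fpath_snoc_iff[OF assms])

lemma push_eq_sum_paths:
  assumes "l < l'"
  shows "push B l l' a w = (\<Sum>q\<in>paths_into l l' w. a (bs B (Suc l) (hd q)))"
  using assms
proof (induction l' arbitrary: w)
  case (Suc l')
  show ?case
  proof (cases "l' = l")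
    case True
    have "paths_into l (Suc l) w = (\<lambda>e. [e]) ` fibre B (Suc l) w"
      unfolding paths_into_def fibre_def fpath_Suc_iff by auto
    then show ?thesis
      using True by (simp add: fibre_def sum.reindex inj_on_def)
  next
    case False
    then have "l < l'" using Suc.prems by simp
    have inj: "inj_on (\<lambda>(e, q). q @ [e]) X" for X :: "('e \<times> 'e list) set"
      by (auto simp: inj_on_def)
    have "push B l (Suc l') a w =
        (\<Sum>e\<in>fibre B (Suc l') w. \<Sum>q\<in>paths_into l l' (bs B (Suc l') e). a (bs B (Suc l) (hd q)))"
      using \<open>l < l'\<close> by (simp add: fibre_def Suc.IH)
    also have "\<dots> = (\<Sum>(e, q)\<in>(SIGMA e:fibre B (Suc l') w. paths_into l l' (bs B (Suc l') e)).
        a (bs B (Suc l) (hd (q @ [e]))))"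
    proof -
      have "q \<noteq> []" if "q \<in> paths_into l l' v" for q v
        using that fpath_nonempty unfolding paths_into_def by blast
      then show ?thesis
        by (subst sum.Sigma) (auto simp: finite_fibre finite_paths_into intro!: sum.cong)
    qed
    also have "\<dots> = (\<Sum>q\<in>paths_into l (Suc l') w. a (bs B (Suc l) (hd q)))"
      unfolding paths_into_Suc[OF \<open>l < l'\<close>] sum.reindex[OF inj]
      by (simp add: comp_def case_prod_unfold)
    finally show ?thesis .
  qed
qed simp

lemma push_delta_eq_card:
  assumes "l < l'"
  shows "push B l l' (delta u) w = int (card {q\<in>paths_into l l' w. bs B (Suc l) (hd q) = u})"
  unfolding push_eq_sum_paths[OF assms] delta_def
  by (simp add: sum.inter_filter[OF finite_paths_into, symmetric])

end

section \<open>Heights along a positive telescoping\<close>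

locale positive_telescoping = bratteli_diagram +
  fixes p :: "nat \<Rightarrow> nat"
  assumes p_telescoping: "is_telescoping_seq p"
    and p_positive: "positive_incidence (telescope B p)"
begin

lemma p_0: "p 0 = 0"
  and strict_mono_p: "strict_mono p"
  using p_telescoping unfolding is_telescoping_seq_def by auto

lemma p_less: "a < b \<Longrightarrow> p a < p b"
  using strict_mono_p by (simp add: strict_mono_less)

lemma p_le: "a \<le> b \<Longrightarrow> p a \<le> p b"
  using strict_mono_p by (simp add: strict_mono_less_eq)

lemma push_delta_Suc_pos:
  assumes "u \<in> bV B (p a)" "w \<in> bV B (p (Suc a))"
  shows "1 \<le> push B (p a) (p (Suc a)) (delta u) w"
proof -
  have "\<exists>q. fpath B (p a) (p (Suc a)) q \<and> bs B (Suc (p a)) (hd q) = u \<and>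
      br B (p (Suc a)) (last q) = w"
    using p_positive assms unfolding positive_incidence_def telescope_def by simp
  then obtain q where "fpath B (p a) (p (Suc a)) q" "bs B (Suc (p a)) (hd q) = u"
    "br B (p (Suc a)) (last q) = w"
    by blast
  then have "q \<in> {q\<in>paths_into (p a) (p (Suc a)) w. bs B (Suc (p a)) (hd q) = u}"
    by (simp add: paths_into_def)
  then have "0 < card {q\<in>paths_into (p a) (p (Suc a)) w. bs B (Suc (p a)) (hd q) = u}"
    using finite_paths_into by (auto simp: card_gt_0_iff)
  then show ?thesis
    using push_delta_eq_card[of "p a" "p (Suc a)" u w] p_less by simp
qed

lemma push_delta_pos:
  assumes "a < b" "u \<in> bV B (p a)" "w \<in> bV B (p b)"
  shows "1 \<le> push B (p a) (p b) (delta u) w"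
  using assms(1,3)
proof (induction b arbitrary: w)
  case (Suc b)
  show ?case
  proof (cases "a = b")
    case False
    then have "a < b" using Suc.prems by simp
    obtain y where y: "y \<in> bV B (p b)"
      using level_nonempty by blast
    have "1 \<le> push B (p b) (p (Suc b)) (delta y) w"
      using push_delta_Suc_pos y Suc.prems by simp
    also have "\<dots> \<le> push B (p b) (p (Suc b)) (push B (p a) (p b) (delta u)) w"
      using Suc.IH[OF \<open>a < b\<close>] Suc.prems \<open>a < b\<close>
      by (intro push_mono ballI delta_le push_nonneg) (auto intro: delta_nonneg p_le)
    also have "\<dots> = push B (p a) (p (Suc b)) (delta u) w"
      using Suc.prems \<open>a < b\<close> by (intro push_push) (auto intro: p_le)
    finally show ?thesis .
  qed (use push_delta_Suc_pos assms(2) Suc.prems in auto)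
qed simp

lemma push_delta_le_push_delta:
  assumes "a < b" "b \<le> c" "u \<in> bV B (p a)" "y \<in> bV B (p b)" "w \<in> bV B (p c)"
  shows "push B (p b) (p c) (delta y) w \<le> push B (p a) (p c) (delta u) w"
proof -
  have "push B (p b) (p c) (delta y) w \<le> push B (p b) (p c) (push B (p a) (p b) (delta u)) w"
    using assms push_delta_pos[OF assms(1,3)]
    by (intro push_mono ballI delta_le push_nonneg) (auto intro: delta_nonneg p_le)
  also have "\<dots> = push B (p a) (p c) (delta u) w"
    using assms by (intro push_push) (auto intro: p_le less_imp_le)
  finally show ?thesis .
qed

lemma height_pos:
  assumes "w \<in> bV B (p a)"
  shows "1 \<le> height (p a) w"
proof (cases a)
  case (Suc a')
  obtain v0 where v0: "bV B 0 = {v0}"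
    using bratteli unfolding bratteli_def by auto
  have "1 \<le> push B (p 0) (p a) (delta v0) w"
    using push_delta_pos[of 0 a v0 w] assms v0 Suc p_0 by simp
  also have "\<dots> \<le> height (p a) w"
    unfolding height_def p_0 using assms v0 by (intro push_mono) (auto simp: delta_def)
  finally show ?thesis .
qed (use assms p_0 in \<open>simp add: height_def\<close>)

lemma height_sum_le:
  assumes "a < b" "S \<subseteq> bV B (p a)" "w \<in> bV B (p b)"
  shows "(\<Sum>u\<in>S. height (p a) u) \<le> height (p b) w"
proof -
  have nonneg: "0 \<le> height (p a) u" if "u \<in> bV B (p a)" for u
    using height_pos[OF that] by simp
  have "(\<Sum>u\<in>S. height (p a) u) \<le> (\<Sum>u\<in>S. height (p a) u * push B (p a) (p b) (delta u) w)"
    using assms nonneg push_delta_pos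
    by (intro sum_mono) (metis (no_types, lifting) mult.right_neutral mult_left_mono subsetD)
  also have "\<dots> \<le> (\<Sum>u\<in>bV B (p a). height (p a) u * push B (p a) (p b) (delta u) w)"
    using assms nonneg push_delta_pos finite_level
    by (intro sum_mono2) (auto intro!: mult_nonneg_nonneg push_nonneg delta_nonneg p_le)
  also have "\<dots> = height (p b) w"
    using push_height_decompose[OF p_le[OF less_imp_le[OF assms(1)]] assms(3)] by simp
  finally show ?thesis .
qed

lemma height_lower_bound_mono:
  assumes "a \<le> b" "\<forall>v\<in>bV B (p a). t \<le> height (p a) v" "w \<in> bV B (p b)"
  shows "t \<le> height (p b) w"
proof (cases "a = b")
  case False
  obtain u where "u \<in> bV B (p a)"
    using level_nonempty by blast
  then show ?thesis
    using height_sum_le[of a b "{u}" w] assms False by force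
qed (use assms in simp)

text \<open>Pigeonhole on the decomposition of height w as the sum over y of height y times the
  number of paths from y to w.\<close>

lemma exists_vertex_many_paths:
  assumes "a < b" "w \<in> bV B (p b)"
    and big: "K * (\<Sum>y\<in>bV B (p a). height (p a) y) \<le> height (p b) w"
  obtains y where "y \<in> bV B (p a)" "K \<le> push B (p a) (p b) (delta y) w"
proof -
  have "\<exists>y\<in>bV B (p a). K \<le> push B (p a) (p b) (delta y) w"
  proof (rule ccontr)
    assume "\<not> ?thesis"
    then have small: "\<forall>y\<in>bV B (p a). push B (p a) (p b) (delta y) w \<le> K - 1"
      by fastforce
    obtain y0 where y0: "y0 \<in> bV B (p a)"
      using level_nonempty by blast
    have "0 < height (p a) y0"
      using height_pos[OF y0] by simp
    then have "0 < (\<Sum>y\<in>bV B (p a). height (p a) y)"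
      using height_pos by (intro sum_pos2[OF finite_level y0]) (auto intro: order_trans[OF zero_le_one])
    then have "(\<Sum>y\<in>bV B (p a). height (p a) y) * (K - 1) < K * (\<Sum>y\<in>bV B (p a). height (p a) y)"
      by (simp add: algebra_simps)
    also have "\<dots> \<le> height (p b) w"
      by (rule big)
    also have "\<dots> = (\<Sum>y\<in>bV B (p a). height (p a) y * push B (p a) (p b) (delta y) w)"
      using push_height_decompose[OF p_le[OF less_imp_le[OF assms(1)]] assms(2)] by simp
    also have "\<dots> \<le> (\<Sum>y\<in>bV B (p a). height (p a) y * (K - 1))"
      using small height_pos by (intro sum_mono mult_left_mono) (auto intro: order_trans[OF zero_le_one])
    finally show False
      by (simp add: sum_distrib_right)
  qed
  then show thesis
    using that by blast
qed

end

locale trivial_rational_subgroup = positive_telescoping +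
  assumes rational: "rational_subgroup B = int_multiples_of_unit B"
begin

lemma Gcd_height: "Gcd (height l ` bV B l) = 1"
proof (rule Gcd_height_eq_1[OF rational])
  fix m
  obtain w where "w \<in> bV B (p m)"
    using level_nonempty by blast
  then show "\<exists>m'\<ge>m. \<exists>w\<in>bV B m'. height m' w \<noteq> 0"
    using height_pos[of w m] strict_mono_imp_increasing[OF strict_mono_p, of m] by force
qed

lemma two_vertices_if_height_ge_2:
  assumes "\<forall>v\<in>bV B l. 2 \<le> height l v"
  obtains u1 u2 where "u1 \<in> bV B l" "u2 \<in> bV B l" "u1 \<noteq> u2"
proof -
  obtain u1 where u1: "u1 \<in> bV B l"
    using level_nonempty by blast
  have "bV B l \<noteq> {u1}"
  proof
    assume "bV B l = {u1}"
    then show False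
      using Gcd_height[of l] assms u1 by simp
  qed
  then show thesis
    using that u1 by blast
qed

text \<open>Once all heights exceed 1, the gcd condition leaves at least two vertices on every
  level, so the heights double from one level to the next.\<close>

lemma height_eventually_ge:
  assumes "v0 \<in> bV B (p a0)" "2 \<le> height (p a0) v0"
  obtains a where "\<And>b w. a \<le> b \<Longrightarrow> w \<in> bV B (p b) \<Longrightarrow> K \<le> height (p b) w"
proof -
  have power: "\<forall>w\<in>bV B (p (Suc a0 + j)). 2 ^ Suc j \<le> height (p (Suc a0 + j)) w" for j
  proof (induction j)
    case 0
    have "height (p a0) v0 \<le> height (p (Suc a0)) w" if "w \<in> bV B (p (Suc a0))" for w
      using height_sum_le[of a0 "Suc a0" "{v0}" w] assms that by simp
    then show ?case
      using assms(2) by fastforce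
  next
    case (Suc j)
    have "(2::int) \<le> 2 ^ Suc j"
      using one_le_power[of "2::int" j] by simp
    then have "\<forall>v\<in>bV B (p (Suc a0 + j)). 2 \<le> height (p (Suc a0 + j)) v"
      using Suc.IH by (meson order_trans)
    then obtain u1 u2 where u: "u1 \<in> bV B (p (Suc a0 + j))" "u2 \<in> bV B (p (Suc a0 + j))" "u1 \<noteq> u2"
      by (rule two_vertices_if_height_ge_2)
    show ?case
    proof
      fix w assume w: "w \<in> bV B (p (Suc a0 + Suc j))"
      have "2 * 2 ^ Suc j \<le> (\<Sum>u\<in>{u1, u2}. height (p (Suc a0 + j)) u)"
        using Suc.IH[rule_format, OF u(1)] Suc.IH[rule_format, OF u(2)] u(3) by simp
      also have "\<dots> \<le> height (p (Suc a0 + Suc j)) w"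
        using height_sum_le[of "Suc a0 + j" "Suc a0 + Suc j" "{u1, u2}" w] u w by simp
      finally show "2 ^ Suc (Suc j) \<le> height (p (Suc a0 + Suc j)) w"
        by simp
    qed
  qed
  have "K \<le> 2 ^ Suc (nat K)"
  proof -
    have "int (nat K) < 2 ^ nat K"
      using of_nat_less_iff[where 'a=int, THEN iffD2, OF less_exp[of "nat K"]] by simp
    then show ?thesis by (cases "0 \<le> K") auto
  qed
  moreover have "2 ^ Suc (nat K) \<le> height (p b) w"
    if "Suc a0 + nat K \<le> b" "w \<in> bV B (p b)" for b w
    using height_lower_bound_mono[OF that(1) power[of "nat K"] that(2)] .
  ultimately show thesis
    using that[of "Suc a0 + nat K"] by fastforce
qed

lemma many_paths_eventually:
  assumes "v0 \<in> bV B (p a0)" "2 \<le> height (p a0) v0"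
  obtains b where "l < b" "\<And>u w. u \<in> bV B (p l) \<Longrightarrow> w \<in> bV B (p b) \<Longrightarrow>
    K \<le> push B (p l) (p b) (delta u) w"
proof -
  define G where "G = (\<Sum>y\<in>bV B (p (Suc l)). height (p (Suc l)) y)"
  obtain a where a: "\<And>b w. a \<le> b \<Longrightarrow> w \<in> bV B (p b) \<Longrightarrow> K * G \<le> height (p b) w"
    using height_eventually_ge[OF assms] by blast
  define b where "b = max a (Suc (Suc l))"
  have "K \<le> push B (p l) (p b) (delta u) w" if u: "u \<in> bV B (p l)" and w: "w \<in> bV B (p b)" for u w
  proof -
    have "Suc l < b" "K * (\<Sum>y\<in>bV B (p (Suc l)). height (p (Suc l)) y) \<le> height (p b) w"
      using a[of b w] w unfolding G_def b_def by auto
    then obtain y where y: "y \<in> bV B (p (Suc l))" "K \<le> push B (p (Suc l)) (p b) (delta y) w"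
      using exists_vertex_many_paths w by blast
    then show ?thesis
      using push_delta_le_push_delta[of l "Suc l" b u y w] u w unfolding b_def by fastforce
  qed
  then show thesis
    using that[of b] unfolding b_def by auto
qed

end

section \<open>Lists with prescribed multiplicities\<close>

definition replicate_each :: "'a list \<Rightarrow> ('a \<Rightarrow> nat) \<Rightarrow> 'a list" where
  "replicate_each vs \<kappa> = concat (map (\<lambda>u. replicate (\<kappa> u) u) vs)"

lemma set_replicate_each: "set (replicate_each vs \<kappa>) \<subseteq> set vs"
  unfolding replicate_each_def by auto

lemma sum_list_replicate_each:
  "distinct vs \<Longrightarrow> sum_list (map h (replicate_each vs \<kappa>)) = (\<Sum>u\<in>set vs. \<kappa> u * h u)"
  by (induction vs) (simp_all add: replicate_each_def sum_list_replicate)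

lemma count_replicate_each:
  "distinct vs \<Longrightarrow> count (mset (replicate_each vs \<kappa>)) x = (if x \<in> set vs then \<kappa> x else 0)"
  by (induction vs) (auto simp: replicate_each_def)

lemma exists_list_count_eq:
  assumes "finite A" "\<forall>u. u \<notin> A \<longrightarrow> f u = 0" "\<forall>u. count (mset P) u \<le> f u"
  shows "\<exists>R. \<forall>u. count (mset (P @ R)) u = f u"
proof -
  obtain vs where vs: "distinct vs" "set vs = A"
    using finite_distinct_list[OF assms(1)] by blast
  have "count (mset (P @ replicate_each vs (\<lambda>u. f u - count (mset P) u))) u = f u" for u
    using assms(2,3)[rule_format, of u] count_replicate_each[OF vs(1), of "\<lambda>u. f u - count (mset P) u" u] vs(2)
    by (cases "u \<in> A") (simp_all add: le_add_diff_inverse del: count_mset_0_iff)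
  then show ?thesis
    by blast
qed

lemma exists_distinct_list_map_eq:
  assumes "finite S" "\<forall>u. count (mset P) u = card {e\<in>S. f e = u}"
  shows "\<exists>Ls. distinct Ls \<and> set Ls = S \<and> map f Ls = P"
  using assms
proof (induction P arbitrary: S)
  case Nil
  have "S = {}"
  proof (rule ccontr)
    assume "S \<noteq> {}"
    then obtain e where "e \<in> S" by blast
    then have "0 < card {e'\<in>S. f e' = f e}"
      using Nil.prems(1) by (auto simp: card_gt_0_iff)
    then show False
      using Nil.prems(2) by simp
  qed
  then show ?case by simp
next
  case (Cons u P)
  have "card {e\<in>S. f e = u} > 0"
    using Cons.prems(2)[rule_format, of u] by simp
  then obtain e where e: "e \<in> S" "f e = u"
    by (auto simp: card_gt_0_iff)
  have "\<forall>u'. count (mset P) u' = card {e'\<in>S - {e}. f e' = u'}"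
  proof
    fix u'
    show "count (mset P) u' = card {e'\<in>S - {e}. f e' = u'}"
    proof (cases "u' = u")
      case True
      have "{e'\<in>S - {e}. f e' = u'} = {e'\<in>S. f e' = u'} - {e}"
        by auto
      then show ?thesis
        using Cons.prems(1) Cons.prems(2)[rule_format, of u'] e True by simp
    next
      case False
      have "{e'\<in>S - {e}. f e' = u'} = {e'\<in>S. f e' = u'}"
        using e False by auto
      then show ?thesis
        using Cons.prems(2)[rule_format, of u'] False by simp
    qed
  qed
  then obtain Ls where "distinct Ls" "set Ls = S - {e}" "map f Ls = P"
    using Cons.IH[of "S - {e}"] Cons.prems(1) by blast
  then show ?case
    using e by (intro exI[of _ "e # Ls"]) auto
qed

section \<open>The Frobenius coin problem and gap patterns\<close>

lemma Gcd_eq_sum_mult: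
  fixes h :: "'a \<Rightarrow> int"
  assumes "finite V"
  shows "\<exists>a. (\<Sum>u\<in>V. a u * h u) = Gcd (h ` V)"
  using assms
proof (induction V rule: finite_induct)
  case (insert x F)
  obtain a where a: "(\<Sum>u\<in>F. a u * h u) = Gcd (h ` F)"
    using insert.IH by blast
  obtain s t where st: "s * h x + t * Gcd (h ` F) = gcd (h x) (Gcd (h ` F))"
    using bezout_int by blast
  define a' where "a' = (\<lambda>y. if y = x then s else t * a y)"
  have "(\<Sum>u\<in>F. a' u * h u) = t * (\<Sum>u\<in>F. a u * h u)"
    unfolding sum_distrib_left using insert.hyps by (intro sum.cong) (auto simp: a'_def)
  then have "(\<Sum>u\<in>insert x F. a' u * h u) = s * h x + t * (\<Sum>u\<in>F. a u * h u)"
    using insert.hyps by (simp add: a'_def)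
  also have "\<dots> = Gcd (h ` insert x F)"
    using st a by simp
  finally show ?case by blast
qed simp

text \<open>Write N = q h(u1) + t with 0 \<le> t < h(u1) and scale a Bezout relation by t; adding
  h(u1) |a u| to the other coefficients and compensating at u1 makes every coefficient
  nonnegative once q is large.\<close>

lemma frobenius_int:
  fixes h :: "'a \<Rightarrow> int"
  assumes fin: "finite V" and u1: "u1 \<in> V" and pos: "\<forall>u\<in>V. 1 \<le> h u" and gcd: "Gcd (h ` V) = 1"
  shows "\<exists>F. \<forall>N\<ge>F. \<exists>\<kappa>. (\<forall>u. 0 \<le> \<kappa> u) \<and> (\<Sum>u\<in>V. \<kappa> u * h u) = N"
proof -
  obtain a where a: "(\<Sum>u\<in>V. a u * h u) = 1"
    using Gcd_eq_sum_mult[OF fin, of h] gcd by auto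
  define h1 where "h1 = h u1"
  have h1: "1 \<le> h1"
    using pos u1 unfolding h1_def by auto
  define S where "S = (\<Sum>u\<in>V - {u1}. \<bar>a u\<bar> * h u)"
  have a1: "a u1 * h1 + (\<Sum>u\<in>V - {u1}. a u * h u) = 1"
    using a sum.remove[OF fin u1, of "\<lambda>u. a u * h u"] unfolding h1_def by simp
  have "\<exists>\<kappa>. (\<forall>u. 0 \<le> \<kappa> u) \<and> (\<Sum>u\<in>V. \<kappa> u * h u) = N"
    if N: "(\<bar>a u1\<bar> * h1 + S + 1) * h1 \<le> N" for N
  proof -
    define q where "q = N div h1"
    define t where "t = N mod h1"
    have Nqt: "N = q * h1 + t" and t: "0 \<le> t" "t < h1"
      unfolding q_def t_def using h1 by auto
    have "(\<bar>a u1\<bar> * h1 + S + 1) * h1 < (q + 1) * h1"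
      using N Nqt t by (simp add: algebra_simps)
    then have q: "\<bar>a u1\<bar> * h1 + S + 1 \<le> q"
      using h1 by (simp add: mult_less_cancel_right)
    have bound: "- (h1 * \<bar>a u\<bar>) \<le> t * a u" for u
    proof -
      have "\<bar>t * a u\<bar> \<le> h1 * \<bar>a u\<bar>"
        using t by (simp add: abs_mult mult_right_mono)
      then show ?thesis
        using abs_ge_minus_self[of "t * a u"] by linarith
    qed
    define \<kappa> where "\<kappa> = (\<lambda>u. if u = u1 then q + t * a u1 - S else t * a u + h1 * \<bar>a u\<bar>)"
    have "0 \<le> \<kappa> u" for u
      using bound[of u] q unfolding \<kappa>_def by (auto simp: mult.commute)
    moreover have "(\<Sum>u\<in>V. \<kappa> u * h u) = \<kappa> u1 * h1 + (\<Sum>u\<in>V - {u1}. \<kappa> u * h u)"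
      using sum.remove[OF fin u1, of "\<lambda>u. \<kappa> u * h u"] unfolding h1_def by simp
    moreover have "(\<Sum>u\<in>V - {u1}. \<kappa> u * h u) =
        (\<Sum>u\<in>V - {u1}. t * (a u * h u) + h1 * (\<bar>a u\<bar> * h u))"
      by (intro sum.cong) (auto simp: \<kappa>_def algebra_simps)
    then have "(\<Sum>u\<in>V - {u1}. \<kappa> u * h u) = t * (\<Sum>u\<in>V - {u1}. a u * h u) + h1 * S"
      by (simp add: S_def sum.distrib sum_distrib_left)
    moreover have "t * (a u1 * h1) + t * (\<Sum>u\<in>V - {u1}. a u * h u) = t"
      using a1 by (simp flip: distrib_left)
    ultimately show ?thesis
      using Nqt by (intro exI[of _ \<kappa>]) (simp add: \<kappa>_def algebra_simps)
  qed
  then show ?thesis by blast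
qed

lemma frobenius_nat:
  fixes h :: "'a \<Rightarrow> nat"
  assumes "finite V" "V \<noteq> {}" "\<forall>u\<in>V. 1 \<le> h u" "Gcd ((\<lambda>u. int (h u)) ` V) = 1"
  shows "\<exists>F. \<forall>N\<ge>F. \<exists>\<kappa>::'a \<Rightarrow> nat. (\<Sum>u\<in>V. \<kappa> u * h u) = N"
proof -
  obtain u1 where "u1 \<in> V"
    using assms(2) by blast
  then obtain F where F: "\<forall>N\<ge>F. \<exists>\<kappa>. (\<forall>u. 0 \<le> \<kappa> u) \<and> (\<Sum>u\<in>V. \<kappa> u * int (h u)) = N"
    using frobenius_int[OF assms(1), of u1 "\<lambda>u. int (h u)"] assms(3,4) by auto
  have "\<exists>\<kappa>::'a \<Rightarrow> nat. (\<Sum>u\<in>V. \<kappa> u * h u) = N" if N: "nat F \<le> N" for N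
  proof -
    obtain \<kappa> where \<kappa>: "\<forall>u. 0 \<le> \<kappa> u" "(\<Sum>u\<in>V. \<kappa> u * int (h u)) = int N"
      using F N by (auto simp: nat_le_iff)
    have "int (\<Sum>u\<in>V. nat (\<kappa> u) * h u) = int N"
      using \<kappa> by (simp add: of_nat_sum)
    then show ?thesis
      by (intro exI[of _ "\<lambda>u. nat (\<kappa> u)"]) (simp only: of_nat_eq_iff)
  qed
  then show ?thesis by blast
qed

lemma exists_list_sum_eq:
  fixes h :: "'a \<Rightarrow> nat"
  assumes "finite V" "V \<noteq> {}" "\<forall>u\<in>V. 1 \<le> h u" "Gcd ((\<lambda>u. int (h u)) ` V) = 1"
  obtains F where "\<And>N. F \<le> N \<Longrightarrow> \<exists>xs. set xs \<subseteq> V \<and> sum_list (map h xs) = N"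
proof -
  obtain F where F: "\<forall>N\<ge>F. \<exists>\<kappa>::'a \<Rightarrow> nat. (\<Sum>u\<in>V. \<kappa> u * h u) = N"
    using frobenius_nat[OF assms] by blast
  obtain vs where vs: "distinct vs" "set vs = V"
    using finite_distinct_list[OF assms(1)] by blast
  have "\<exists>xs. set xs \<subseteq> V \<and> sum_list (map h xs) = N" if N: "F \<le> N" for N
  proof -
    obtain \<kappa> where "(\<Sum>u\<in>V. \<kappa> u * h u) = N"
      using F N by blast
    then show ?thesis
      using set_replicate_each[of vs \<kappa>] sum_list_replicate_each[OF vs(1), of h \<kappa>] vs(2) by blast
  qed
  then show thesis
    using that by blast
qed

text \<open>With h the tower heights, the prefix weights of the list of sources of a fibre are the
  offsets of its edges; a gap pattern inside that list realises every offset difference in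
  [G, G + W] between edges with prescribed sources.\<close>

definition gap_pattern :: "('a \<Rightarrow> nat) \<Rightarrow> 'a set \<Rightarrow> nat \<Rightarrow> nat \<Rightarrow> 'a list \<Rightarrow> bool" where
  "gap_pattern h V G W P \<longleftrightarrow> set P \<subseteq> V \<and>
    (\<forall>v\<in>V. \<forall>w\<in>V. \<forall>d. G \<le> d \<and> d \<le> G + W \<longrightarrow>
      (\<exists>r r'. r < r' \<and> r' < length P \<and> P ! r = v \<and> P ! r' = w \<and>
         sum_list (map h (take r' P)) = sum_list (map h (take r P)) + d))"

text \<open>Concatenate, for every triple (v, w, d), a block v xs w whose middle part xs has weight
  d - h v.\<close>

lemma gap_pattern_exists:
  fixes h :: "'a \<Rightarrow> nat"
  assumes "finite V" "V \<noteq> {}" "\<forall>u\<in>V. 1 \<le> h u" "Gcd ((\<lambda>u. int (h u)) ` V) = 1"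
  shows "\<exists>G P. gap_pattern h V G W P"
proof -
  obtain F where F: "\<And>N. F \<le> N \<Longrightarrow> \<exists>xs. set xs \<subseteq> V \<and> sum_list (map h xs) = N"
    using exists_list_sum_eq[OF assms] by blast
  define fill where "fill = (\<lambda>N. SOME xs. set xs \<subseteq> V \<and> sum_list (map h xs) = N)"
  have fill: "set (fill N) \<subseteq> V" "sum_list (map h (fill N)) = N" if "F \<le> N" for N
    using someI_ex[OF F[OF that]] unfolding fill_def by auto
  define Hm where "Hm = (\<Sum>u\<in>V. h u)"
  have Hm: "h v \<le> Hm" if "v \<in> V" for v
    unfolding Hm_def using assms(1) that by (intro member_le_sum) auto
  define G where "G = F + Hm"
  obtain vs where vs: "set vs = V"
    using finite_list[OF assms(1)] by blast
  define triples where "triples = [(v, w, d). v \<leftarrow> vs, w \<leftarrow> vs, d \<leftarrow> [G..<G + W + 1]]"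
  define block where "block = (\<lambda>(v, w, d). [v] @ fill (d - h v) @ [w])"
  define P where "P = concat (map block triples)"
  have "set P \<subseteq> V"
  proof
    fix x assume "x \<in> set P"
    then obtain v w d where t: "(v, w, d) \<in> set triples" and x: "x \<in> set (block (v, w, d))"
      unfolding P_def by auto
    have vwd: "v \<in> V" "w \<in> V" "G \<le> d"
      using t vs unfolding triples_def by auto
    then have "F \<le> d - h v"
      using Hm[of v] unfolding G_def by linarith
    then show "x \<in> V"
      using x vwd fill(1) unfolding block_def by auto
  qed
  moreover have "\<exists>r r'. r < r' \<and> r' < length P \<and> P ! r = v \<and> P ! r' = w \<and>
      sum_list (map h (take r' P)) = sum_list (map h (take r P)) + d"
    if v: "v \<in> V" and w: "w \<in> V" and d: "G \<le> d" "d \<le> G + W" for v w d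
  proof -
    have "d \<in> set [G..<G + W + 1]"
      using d by auto
    then have "(v, w, d) \<in> set triples"
      unfolding triples_def using v w vs by force
    then obtain xs ys where "triples = xs @ (v, w, d) # ys"
      by (meson split_list)
    then have P: "P = concat (map block xs) @ [v] @ fill (d - h v) @ [w] @ concat (map block ys)"
      unfolding P_def block_def by simp
    have hv: "h v \<le> d" "F \<le> d - h v"
      using Hm[OF v] d unfolding G_def by linarith+
    show ?thesis
      using fill(2)[OF hv(2)] hv(1)
      by (intro exI[of _ "length (concat (map block xs))"]
          exI[of _ "length (concat (map block xs)) + 1 + length (fill (d - h v))"])
        (simp add: P nth_append)
  qed
  ultimately show ?thesis
    unfolding gap_pattern_def by blast
qed

lemma gap_pattern_cong:
  assumes "gap_pattern h V G W P" "\<And>v. v \<in> V \<Longrightarrow> h v = h' v"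
  shows "gap_pattern h' V G W P"
proof -
  have eq: "map h (take r P) = map h' (take r P)" for r
    using assms unfolding gap_pattern_def by (auto dest!: in_set_takeD)
  show ?thesis
    using assms(1) unfolding gap_pattern_def eq .
qed

section \<open>Orderings given by lists\<close>

lemma path_space_edge: "x \<in> path_space B \<Longrightarrow> x i \<in> bE B (Suc i)"
  and path_space_link: "x \<in> path_space B \<Longrightarrow> br B (Suc i) (x i) = bs B (Suc (Suc i)) (x (Suc i))"
  unfolding path_space_def by auto

text \<open>Each fibre is listed by L, and the first and the last edge of every list start at the
  distinguished vertex c k; this is what makes the maximal and minimal paths unique.\<close>

locale list_ordered = bratteli_diagram D for D :: "('a, 'b) bdiag" +
  fixes L :: "nat \<Rightarrow> 'a \<Rightarrow> 'b list" and c :: "nat \<Rightarrow> 'a"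
  assumes positive: "positive_incidence D"
    and set_L: "v \<in> bV D (Suc k) \<Longrightarrow> set (L (Suc k) v) = fibre D (Suc k) v"
    and distinct_L: "v \<in> bV D (Suc k) \<Longrightarrow> distinct (L (Suc k) v)"
    and c_in_level: "c k \<in> bV D k"
    and source_hd_L: "v \<in> bV D (Suc k) \<Longrightarrow> bs D (Suc k) (hd (L (Suc k) v)) = c k"
    and source_last_L: "v \<in> bV D (Suc k) \<Longrightarrow> bs D (Suc k) (last (L (Suc k) v)) = c k"
begin

lemma L_nonempty: "v \<in> bV D (Suc k) \<Longrightarrow> L (Suc k) v \<noteq> []"
  using positive c_in_level[of k] set_L unfolding positive_incidence_def fibre_def by fastforce

definition list_order :: "nat \<Rightarrow> 'b rel" where
  "list_order k = {(e, e'). \<exists>v\<in>bV D k. \<exists>i j. i \<le> j \<and> j < length (L k v) \<and>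
     e = L k v ! i \<and> e' = L k v ! j}"

definition edge_index :: "nat \<Rightarrow> 'b \<Rightarrow> nat" where
  "edge_index k e = (THE i. i < length (L k (br D k e)) \<and> L k (br D k e) ! i = e)"

lemma edge_index:
  assumes "e \<in> bE D (Suc k)"
  shows "edge_index (Suc k) e < length (L (Suc k) (br D (Suc k) e))"
    and "L (Suc k) (br D (Suc k) e) ! edge_index (Suc k) e = e"
proof -
  have "e \<in> set (L (Suc k) (br D (Suc k) e))"
    using set_L[OF range_in_level[OF assms]] assms unfolding fibre_def by auto
  then have "\<exists>!i. i < length (L (Suc k) (br D (Suc k) e)) \<and> L (Suc k) (br D (Suc k) e) ! i = e"
    using distinct_Ex1[OF distinct_L[OF range_in_level[OF assms]]] by blast
  then have "(THE i. i < length (L (Suc k) (br D (Suc k) e)) \<and> L (Suc k) (br D (Suc k) e) ! i = e)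
      < length (L (Suc k) (br D (Suc k) e)) \<and>
    L (Suc k) (br D (Suc k) e) ! (THE i. i < length (L (Suc k) (br D (Suc k) e)) \<and>
      L (Suc k) (br D (Suc k) e) ! i = e) = e"
    by (rule theI')
  then show "edge_index (Suc k) e < length (L (Suc k) (br D (Suc k) e))"
    and "L (Suc k) (br D (Suc k) e) ! edge_index (Suc k) e = e"
    unfolding edge_index_def by auto
qed

lemma nth_L:
  assumes "v \<in> bV D (Suc k)" "i < length (L (Suc k) v)"
  shows "L (Suc k) v ! i \<in> bE D (Suc k)" "br D (Suc k) (L (Suc k) v ! i) = v"
    and "edge_index (Suc k) (L (Suc k) v ! i) = i"
proof -
  have "L (Suc k) v ! i \<in> fibre D (Suc k) v"
    using set_L[OF assms(1)] assms(2) nth_mem by blast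
  then show e: "L (Suc k) v ! i \<in> bE D (Suc k)" and r: "br D (Suc k) (L (Suc k) v ! i) = v"
    unfolding fibre_def by auto
  show "edge_index (Suc k) (L (Suc k) v ! i) = i"
    using edge_index[OF e] r assms distinct_L[OF assms(1)] by (metis nth_eq_iff_index_eq)
qed

lemma hd_L:
  assumes "v \<in> bV D (Suc k)"
  shows "hd (L (Suc k) v) \<in> bE D (Suc k)" "br D (Suc k) (hd (L (Suc k) v)) = v"
    and "edge_index (Suc k) (hd (L (Suc k) v)) = 0"
  using nth_L[OF assms, of 0] L_nonempty[OF assms] by (auto simp: hd_conv_nth)

lemma last_L:
  assumes "v \<in> bV D (Suc k)"
  shows "last (L (Suc k) v) \<in> bE D (Suc k)" "br D (Suc k) (last (L (Suc k) v)) = v"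
    and "Suc (edge_index (Suc k) (last (L (Suc k) v))) = length (L (Suc k) v)"
  using nth_L[OF assms, of "length (L (Suc k) v) - 1"] L_nonempty[OF assms]
  by (auto simp: last_conv_nth)

lemma edge_index_inj:
  assumes "e \<in> bE D (Suc k)" "e' \<in> bE D (Suc k)" "br D (Suc k) e = br D (Suc k) e'"
    and "edge_index (Suc k) e = edge_index (Suc k) e'"
  shows "e = e'"
  using edge_index[OF assms(1)] edge_index[OF assms(2)] assms(3,4) by metis

lemma list_order_iff:
  assumes "e \<in> bE D (Suc k)" "e' \<in> bE D (Suc k)"
  shows "(e, e') \<in> list_order (Suc k) \<longleftrightarrow>
    br D (Suc k) e = br D (Suc k) e' \<and> edge_index (Suc k) e \<le> edge_index (Suc k) e'"
proof
  assume "(e, e') \<in> list_order (Suc k)"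
  then obtain v i j where "v \<in> bV D (Suc k)" "i \<le> j" "j < length (L (Suc k) v)"
    "e = L (Suc k) v ! i" "e' = L (Suc k) v ! j"
    unfolding list_order_def by blast
  then show "br D (Suc k) e = br D (Suc k) e' \<and> edge_index (Suc k) e \<le> edge_index (Suc k) e'"
    using nth_L by auto
next
  assume "br D (Suc k) e = br D (Suc k) e' \<and> edge_index (Suc k) e \<le> edge_index (Suc k) e'"
  then show "(e, e') \<in> list_order (Suc k)"
    unfolding list_order_def using edge_index[OF assms(1)] edge_index[OF assms(2)]
      range_in_level[OF assms(1)] by force
qed

lemma ordering_list_order: "ordering D list_order"
  unfolding ordering_def
proof (intro allI ballI)
  fix k v assume "v \<in> bV D (Suc k)"
  let ?F = "fibre D (Suc k) v"
  let ?R = "list_order (Suc k) \<inter> ?F \<times> ?F"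
  have R: "(e, e') \<in> ?R \<longleftrightarrow> e \<in> ?F \<and> e' \<in> ?F \<and> edge_index (Suc k) e \<le> edge_index (Suc k) e'"
    for e e'
    unfolding fibre_def by (auto simp: list_order_iff)
  have "antisym ?R"
    unfolding antisym_on_def
  proof (intro ballI impI)
    fix e e' assume "(e, e') \<in> ?R" "(e', e) \<in> ?R"
    then have "e \<in> ?F" "e' \<in> ?F" "edge_index (Suc k) e = edge_index (Suc k) e'"
      using R by (blast, blast, meson le_antisym)
    then show "e = e'"
      using edge_index_inj[of e k e'] unfolding fibre_def by auto
  qed
  moreover have "refl_on ?F ?R"
    unfolding refl_on_def using R by blast
  moreover have "trans ?R"
    unfolding trans_on_def using R by (meson le_trans)
  moreover have "total_on ?F ?R"
    unfolding total_on_def using R by (meson nat_le_linear)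
  ultimately show "linear_order_on ?F ?R"
    unfolding linear_order_on_def partial_order_on_def preorder_on_def by blast
qed

lemma is_max_edge_iff:
  assumes "e \<in> bE D (Suc k)"
  shows "is_max_edge D list_order (Suc k) e \<longleftrightarrow>
    Suc (edge_index (Suc k) e) = length (L (Suc k) (br D (Suc k) e))"
proof
  let ?v = "br D (Suc k) e"
  have v: "?v \<in> bV D (Suc k)"
    using range_in_level[OF assms] .
  assume "is_max_edge D list_order (Suc k) e"
  moreover have "last (L (Suc k) ?v) \<in> fibre D (Suc k) ?v"
    using last_L[OF v] unfolding fibre_def by simp
  ultimately have "(last (L (Suc k) ?v), e) \<in> list_order (Suc k)"
    unfolding is_max_edge_def by blast
  then show "Suc (edge_index (Suc k) e) = length (L (Suc k) ?v)"
    using list_order_iff[OF last_L(1)[OF v] assms] last_L[OF v] edge_index(1)[OF assms] by simp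
next
  assume "Suc (edge_index (Suc k) e) = length (L (Suc k) (br D (Suc k) e))"
  show "is_max_edge D list_order (Suc k) e"
    unfolding is_max_edge_def
  proof
    fix e' assume "e' \<in> fibre D (Suc k) (br D (Suc k) e)"
    then have e': "e' \<in> bE D (Suc k)" "br D (Suc k) e' = br D (Suc k) e"
      unfolding fibre_def by auto
    then show "(e', e) \<in> list_order (Suc k)"
      using list_order_iff[OF e'(1) assms] edge_index(1)[OF e'(1)] \<open>Suc _ = _\<close> by auto
  qed
qed

lemma is_min_edge_iff:
  assumes "e \<in> bE D (Suc k)"
  shows "is_min_edge D list_order (Suc k) e \<longleftrightarrow> edge_index (Suc k) e = 0"
proof -
  have v: "br D (Suc k) e \<in> bV D (Suc k)"
    using range_in_level[OF assms] .
  show ?thesis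
    unfolding is_min_edge_def using hd_L[OF v] assms
    by (auto simp: fibre_def list_order_iff)
qed

fun tower_height :: "nat \<Rightarrow> 'a \<Rightarrow> nat" where
  "tower_height 0 v = 1"
| "tower_height (Suc k) v = sum_list (map (\<lambda>e. tower_height k (bs D (Suc k) e)) (L (Suc k) v))"

lemma int_tower_height: "v \<in> bV D k \<Longrightarrow> int (tower_height k v) = height k v"
proof (induction k arbitrary: v)
  case (Suc k)
  have "tower_height (Suc k) v = (\<Sum>e\<in>fibre D (Suc k) v. tower_height k (bs D (Suc k) e))"
    using sum.distinct_set_conv_list[OF distinct_L[OF Suc.prems],
        of "\<lambda>e. tower_height k (bs D (Suc k) e)"] set_L[OF Suc.prems] by simp
  then have "int (tower_height (Suc k) v) =
      (\<Sum>e\<in>fibre D (Suc k) v. int (tower_height k (bs D (Suc k) e)))"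
    by simp
  also have "\<dots> = height (Suc k) v"
    unfolding height_def push_Suc[OF le0]
    by (intro sum.cong) (auto simp: fibre_def Suc.IH[simplified height_def] source_in_level)
  finally show ?case .
qed (simp add: height_def)

lemma tower_height_pos: "v \<in> bV D k \<Longrightarrow> 1 \<le> tower_height k v"
proof (induction k arbitrary: v)
  case (Suc k)
  have "1 \<le> tower_height k (bs D (Suc k) (hd (L (Suc k) v)))"
    using Suc.IH source_in_level hd_L(1)[OF Suc.prems] by blast
  also have "\<dots> \<le> tower_height (Suc k) v"
    using L_nonempty[OF Suc.prems] by (cases "L (Suc k) v") auto
  finally show ?case .
qed simp

text \<open>The tower over v at level k has tower_height k v floors; offset k e counts the floors of
  the tower over br e below the subtower entered through e, so position k x is the floor
  occupied by x.\<close>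

definition offset :: "nat \<Rightarrow> 'b \<Rightarrow> nat" where
  "offset k e = sum_list (map (\<lambda>e'. tower_height k (bs D (Suc k) e'))
     (take (edge_index (Suc k) e) (L (Suc k) (br D (Suc k) e))))"

definition offset_above :: "nat \<Rightarrow> 'b \<Rightarrow> nat" where
  "offset_above k e = sum_list (map (\<lambda>e'. tower_height k (bs D (Suc k) e'))
     (drop (Suc (edge_index (Suc k) e)) (L (Suc k) (br D (Suc k) e))))"

definition position :: "nat \<Rightarrow> (nat \<Rightarrow> 'b) \<Rightarrow> nat" where
  "position k x = (\<Sum>i<k. offset i (x i))"

definition path_vertex :: "nat \<Rightarrow> (nat \<Rightarrow> 'b) \<Rightarrow> 'a" where
  "path_vertex k x = bs D (Suc k) (x k)"

lemma position_Suc: "position (Suc k) x = position k x + offset k (x k)"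
  unfolding position_def by simp

lemma position_cong: "(\<And>i. i < k \<Longrightarrow> y i = x i) \<Longrightarrow> position k y = position k x"
  unfolding position_def by simp

lemma position_shift:
  assumes "j \<le> k" "\<And>i. j \<le> i \<Longrightarrow> i < k \<Longrightarrow> y i = x i"
  shows "position k y + position j x = position k x + position j y"
proof -
  have split: "position k z = position j z + (\<Sum>i\<in>{j..<k}. offset i (z i))" for z
    unfolding position_def lessThan_atLeast0
    using sum.atLeastLessThan_concat[of 0 j k "\<lambda>i. offset i (z i)"] assms(1) by simp
  have "(\<Sum>i\<in>{j..<k}. offset i (y i)) = (\<Sum>i\<in>{j..<k}. offset i (x i))"
    using assms(2) by (intro sum.cong) auto
  then show ?thesis
    using split[of x] split[of y] by simp
qed

lemma path_vertex_in_level: "x \<in> path_space D \<Longrightarrow> path_vertex k x \<in> bV D k"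
  unfolding path_vertex_def using path_space_edge source_in_level by blast

lemma tower_height_split:
  assumes "e \<in> bE D (Suc k)"
  shows "tower_height (Suc k) (br D (Suc k) e) =
    offset k e + tower_height k (bs D (Suc k) e) + offset_above k e"
proof -
  let ?L = "L (Suc k) (br D (Suc k) e)" and ?i = "edge_index (Suc k) e"
    and ?g = "\<lambda>e. tower_height k (bs D (Suc k) e)"
  have "?L = take ?i ?L @ e # drop (Suc ?i) ?L"
    using id_take_nth_drop[OF edge_index(1)[OF assms]] edge_index(2)[OF assms] by simp
  then have "sum_list (map ?g ?L) = sum_list (map ?g (take ?i ?L @ e # drop (Suc ?i) ?L))"
    by (rule arg_cong)
  then show ?thesis
    unfolding offset_def offset_above_def by simp
qed

lemma offset_above_eq_0_iff:
  assumes "e \<in> bE D (Suc k)"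
  shows "offset_above k e = 0 \<longleftrightarrow> is_max_edge D list_order (Suc k) e"
proof -
  let ?L = "L (Suc k) (br D (Suc k) e)" and ?i = "edge_index (Suc k) e"
  have "\<forall>e'\<in>set (drop (Suc ?i) ?L). 1 \<le> tower_height k (bs D (Suc k) e')"
    using set_L[OF range_in_level[OF assms]] tower_height_pos source_in_level
    by (auto simp: fibre_def dest!: in_set_dropD)
  then have "offset_above k e = 0 \<longleftrightarrow> drop (Suc ?i) ?L = []"
    unfolding offset_above_def by (cases "drop (Suc ?i) ?L") auto
  also have "\<dots> \<longleftrightarrow> Suc ?i = length ?L"
    using edge_index(1)[OF assms] by auto
  finally show ?thesis
    using is_max_edge_iff[OF assms] by simp
qed

lemma position_bound:
  assumes "x \<in> path_space D"
  shows "position k x < tower_height k (path_vertex k x)"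
    and "Suc (position k x) = tower_height k (path_vertex k x) \<longleftrightarrow>
      (\<forall>i<k. is_max_edge D list_order (Suc i) (x i))"
proof (induction k)
  case (Suc k)
  have e: "x k \<in> bE D (Suc k)"
    using path_space_edge[OF assms] .
  have split: "tower_height (Suc k) (path_vertex (Suc k) x) =
      offset k (x k) + tower_height k (path_vertex k x) + offset_above k (x k)"
    using tower_height_split[OF e] path_space_link[OF assms] by (simp add: path_vertex_def)
  { case 1 show ?case using Suc.IH(1) split position_Suc by simp }
  { case 2 show ?case
      using Suc.IH split position_Suc offset_above_eq_0_iff[OF e] less_Suc_eq by auto }
qed (simp_all add: position_def)

lemma offset_less_offset:
  assumes "e \<in> bE D (Suc k)" "e' \<in> bE D (Suc k)" "br D (Suc k) e = br D (Suc k) e'"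
    and "edge_index (Suc k) e < edge_index (Suc k) e'"
  shows "offset k e + tower_height k (bs D (Suc k) e) \<le> offset k e'"
proof -
  let ?L = "L (Suc k) (br D (Suc k) e)" and ?g = "\<lambda>e'. tower_height k (bs D (Suc k) e')"
    and ?i = "edge_index (Suc k) e" and ?j = "edge_index (Suc k) e'"
  define R where "R = drop (Suc ?i) (take ?j ?L)"
  have "take (Suc ?i) (take ?j ?L) = take ?i ?L @ [e]"
    using assms(4) edge_index[OF assms(1)] by (simp add: min_def take_Suc_conv_app_nth)
  then have "take ?j ?L = take ?i ?L @ [e] @ R"
    unfolding R_def by (metis append.assoc append_take_drop_id)
  then have "sum_list (map ?g (take ?j ?L)) = sum_list (map ?g (take ?i ?L)) + ?g e + sum_list (map ?g R)"
    by simp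
  then show ?thesis
    unfolding offset_def using assms(3) by simp
qed

lemma path_eq_if_position_eq:
  assumes "x \<in> path_space D" "y \<in> path_space D" "\<forall>i\<ge>k. x i = y i" "position k x = position k y"
  shows "x = y"
  using assms(3,4)
proof (induction k)
  case (Suc k)
  have e: "x k \<in> bE D (Suc k)" "y k \<in> bE D (Suc k)"
    using path_space_edge assms(1,2) by blast+
  have r: "br D (Suc k) (x k) = br D (Suc k) (y k)"
    using Suc.prems(1) path_space_link[OF assms(1), of k] path_space_link[OF assms(2), of k] by simp
  have eq: "position k x + offset k (x k) = position k y + offset k (y k)"
    using Suc.prems(2) position_Suc by simp
  have "position k x < tower_height k (bs D (Suc k) (x k))"
    "position k y < tower_height k (bs D (Suc k) (y k))"
    using position_bound(1) assms(1,2) unfolding path_vertex_def by blast+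
  then have "\<not> edge_index (Suc k) (x k) < edge_index (Suc k) (y k)"
    "\<not> edge_index (Suc k) (y k) < edge_index (Suc k) (x k)"
    using offset_less_offset[OF e r] offset_less_offset[OF e(2,1) r[symmetric]] eq by fastforce+
  then have xy: "x k = y k"
    using edge_index_inj[OF e r] by simp
  moreover have "x i = y i" if "k \<le> i" for i
    using Suc.prems(1) xy that by (cases "i = k") auto
  ultimately show ?case
    using Suc.IH eq by simp
qed auto

lemma simple_bratteli: "simple_bratteli D"
  unfolding simple_bratteli_def
proof (intro conjI exI)
  show "is_telescoping_seq id"
    by (simp add: is_telescoping_seq_def strict_mono_def)
  show "positive_incidence (telescope D id)"
    unfolding positive_incidence_def telescope_def
  proof (intro allI ballI, simp)
    fix k v w assume "v \<in> bV D k" "w \<in> bV D (Suc k)"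
    then obtain e where "e \<in> bE D (Suc k)" "bs D (Suc k) e = v" "br D (Suc k) e = w"
      using positive unfolding positive_incidence_def by blast
    then show "\<exists>q. fpath D k (Suc k) q \<and> bs D (Suc k) (hd q) = v \<and> br D (Suc k) (last q) = w"
      by (intro exI[of _ "[e]"]) (simp add: fpath_Suc_iff)
  qed
qed (rule bratteli)

definition xmax :: "nat \<Rightarrow> 'b" where
  "xmax i = last (L (Suc i) (c (Suc i)))"

definition xmin :: "nat \<Rightarrow> 'b" where
  "xmin i = hd (L (Suc i) (c (Suc i)))"

lemma max_path_xmax: "max_path D list_order xmax"
  unfolding max_path_def path_space_def xmax_def
  using last_L c_in_level source_last_L is_max_edge_iff by auto

lemma min_path_xmin: "min_path D list_order xmin"
  unfolding min_path_def path_space_def xmin_def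
  using hd_L c_in_level source_hd_L is_min_edge_iff by auto

text \<open>A maximal edge is the last edge of its fibre, hence starts at c; so the range of every
  edge of a maximal path is c as well.\<close>

lemma max_path_unique:
  assumes "max_path D list_order x"
  shows "x = xmax"
proof
  fix i
  have x: "x \<in> path_space D"
    using assms unfolding max_path_def by auto
  have last: "x j = last (L (Suc j) (br D (Suc j) (x j)))" for j
  proof -
    have e: "x j \<in> bE D (Suc j)"
      using path_space_edge[OF x] .
    then have "Suc (edge_index (Suc j) (x j)) = length (L (Suc j) (br D (Suc j) (x j)))"
      using assms is_max_edge_iff unfolding max_path_def by blast
    then show ?thesis
      using edge_index[OF e] by (metis diff_Suc_1 last_conv_nth list.size(3) nat.distinct(1))
  qed
  have "br D (Suc i) (x i) = c (Suc i)"
    using last[of "Suc i"] source_last_L range_in_level path_space_edge[OF x] path_space_link[OF x]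
    by metis
  then show "x i = xmax i"
    unfolding xmax_def using last[of i] by simp
qed

lemma min_path_unique:
  assumes "min_path D list_order x"
  shows "x = xmin"
proof
  fix i
  have x: "x \<in> path_space D"
    using assms unfolding min_path_def by auto
  have hd: "x j = hd (L (Suc j) (br D (Suc j) (x j)))" for j
  proof -
    have e: "x j \<in> bE D (Suc j)"
      using path_space_edge[OF x] .
    then have "edge_index (Suc j) (x j) = 0"
      using assms is_min_edge_iff unfolding min_path_def by blast
    then show ?thesis
      using edge_index[OF e] by (metis hd_conv_nth less_zeroE list.size(3))
  qed
  have "br D (Suc i) (x i) = c (Suc i)"
    using hd[of "Suc i"] source_hd_L range_in_level path_space_edge[OF x] path_space_link[OF x]
    by metis
  then show "x i = xmin i"
    unfolding xmin_def using hd[of i] by simp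
qed

lemma proper_ordering_list_order: "proper_ordering D list_order"
  unfolding proper_ordering_def
  using simple_bratteli ordering_list_order max_path_xmax max_path_unique min_path_xmin
    min_path_unique by blast

end

context list_ordered
begin

section \<open>The Vershik map on towers\<close>

lemma min_edge_into_eq_hd:
  assumes "v \<in> bV D (Suc k)"
  shows "min_edge_into D list_order (Suc k) v = hd (L (Suc k) v)"
  unfolding min_edge_into_def
proof (rule the_equality)
  show "hd (L (Suc k) v) \<in> fibre D (Suc k) v \<and>
      (\<forall>e'\<in>fibre D (Suc k) v. (hd (L (Suc k) v), e') \<in> list_order (Suc k))"
    using hd_L[OF assms] by (auto simp: fibre_def list_order_iff)
next
  fix e assume e: "e \<in> fibre D (Suc k) v \<and> (\<forall>e'\<in>fibre D (Suc k) v. (e, e') \<in> list_order (Suc k))"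
  then have "(e, hd (L (Suc k) v)) \<in> list_order (Suc k)"
    using hd_L[OF assms] unfolding fibre_def by auto
  then show "e = hd (L (Suc k) v)"
    using e hd_L[OF assms] edge_index_inj[of e k "hd (L (Suc k) v)"]
    by (auto simp: fibre_def list_order_iff)
qed

lemma succ_edge_eq:
  assumes e: "e \<in> bE D (Suc k)"
    and less: "Suc (edge_index (Suc k) e) < length (L (Suc k) (br D (Suc k) e))"
  shows "succ_edge D list_order (Suc k) e = L (Suc k) (br D (Suc k) e) ! Suc (edge_index (Suc k) e)"
  unfolding succ_edge_def
proof (rule the_equality)
  let ?v = "br D (Suc k) e" and ?i = "edge_index (Suc k) e"
  let ?f = "L (Suc k) ?v ! Suc ?i"
  have f: "?f \<in> bE D (Suc k)" "br D (Suc k) ?f = ?v" "edge_index (Suc k) ?f = Suc ?i"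
    using nth_L[OF range_in_level[OF e] less] by auto
  have index: "g \<noteq> e \<and> (e, g) \<in> list_order (Suc k) \<longleftrightarrow> ?i < edge_index (Suc k) g"
    if "g \<in> fibre D (Suc k) ?v" for g
    using that e edge_index_inj[OF e, of g] by (auto simp: fibre_def list_order_iff order_le_less)
  show "?f \<in> fibre D (Suc k) ?v \<and> ?f \<noteq> e \<and> (e, ?f) \<in> list_order (Suc k) \<and>
      (\<forall>g\<in>fibre D (Suc k) ?v. g \<noteq> e \<and> (e, g) \<in> list_order (Suc k) \<longrightarrow> (?f, g) \<in> list_order (Suc k))"
    using f index by (auto simp: fibre_def list_order_iff)
  fix f' assume f': "f' \<in> fibre D (Suc k) ?v \<and> f' \<noteq> e \<and> (e, f') \<in> list_order (Suc k) \<and>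
      (\<forall>g\<in>fibre D (Suc k) ?v. g \<noteq> e \<and> (e, g) \<in> list_order (Suc k) \<longrightarrow> (f', g) \<in> list_order (Suc k))"
  then have "(f', ?f) \<in> list_order (Suc k)" "?i < edge_index (Suc k) f'"
    using f index[of ?f] index[of f'] by (auto simp: fibre_def)
  then have "edge_index (Suc k) f' = edge_index (Suc k) ?f"
    using f f' list_order_iff[of f' k ?f] by (auto simp: fibre_def)
  then show "f' = ?f"
    using edge_index_inj[of f' k ?f] f f' by (auto simp: fibre_def)
qed

lemma offset_succ:
  assumes e: "e \<in> bE D (Suc k)"
    and less: "Suc (edge_index (Suc k) e) < length (L (Suc k) (br D (Suc k) e))"
  shows "offset k (L (Suc k) (br D (Suc k) e) ! Suc (edge_index (Suc k) e)) =
    offset k e + tower_height k (bs D (Suc k) e)"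
proof -
  let ?v = "br D (Suc k) e" and ?i = "edge_index (Suc k) e"
  have "take (Suc ?i) (L (Suc k) ?v) = take ?i (L (Suc k) ?v) @ [e]"
    using less edge_index(2)[OF e] by (simp add: take_Suc_conv_app_nth)
  then show ?thesis
    unfolding offset_def using nth_L[OF range_in_level[OF e] less] by simp
qed

lemma min_fpath_nth:
  assumes "w \<in> bV D j"
  shows "length (min_fpath D list_order j w) = j"
    and "i < j \<Longrightarrow> min_fpath D list_order j w ! i \<in> bE D (Suc i)"
    and "i < j \<Longrightarrow> edge_index (Suc i) (min_fpath D list_order j w ! i) = 0"
    and "i < j \<Longrightarrow> br D (Suc i) (min_fpath D list_order j w ! i) =
      (if Suc i = j then w else bs D (Suc (Suc i)) (min_fpath D list_order j w ! Suc i))"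
proof -
  have "length (min_fpath D list_order j w) = j \<and> (\<forall>i<j. min_fpath D list_order j w ! i \<in> bE D (Suc i) \<and>
     edge_index (Suc i) (min_fpath D list_order j w ! i) = 0 \<and>
     br D (Suc i) (min_fpath D list_order j w ! i) =
       (if Suc i = j then w else bs D (Suc (Suc i)) (min_fpath D list_order j w ! Suc i)))"
    using assms
  proof (induction j arbitrary: w)
    case (Suc j)
    define e where "e = hd (L (Suc j) w)"
    have e: "e \<in> bE D (Suc j)" "br D (Suc j) e = w" "edge_index (Suc j) e = 0"
      using hd_L[OF Suc.prems] unfolding e_def by auto
    define q where "q = min_fpath D list_order j (bs D (Suc j) e)"
    have "min_fpath D list_order (Suc j) w = q @ [e]"
      using min_edge_into_eq_hd[OF Suc.prems] unfolding q_def e_def by (simp add: Let_def)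
    moreover have "length q = j \<and> (\<forall>i<j. q ! i \<in> bE D (Suc i) \<and> edge_index (Suc i) (q ! i) = 0 \<and>
        br D (Suc i) (q ! i) = (if Suc i = j then bs D (Suc j) e else bs D (Suc (Suc i)) (q ! Suc i)))"
      using Suc.IH[OF source_in_level[OF e(1)]] unfolding q_def .
    ultimately show ?case
      using e by (auto simp: nth_append less_Suc_eq)
  qed simp
  then show "length (min_fpath D list_order j w) = j"
    and "i < j \<Longrightarrow> min_fpath D list_order j w ! i \<in> bE D (Suc i)"
    and "i < j \<Longrightarrow> edge_index (Suc i) (min_fpath D list_order j w ! i) = 0"
    and "i < j \<Longrightarrow> br D (Suc i) (min_fpath D list_order j w ! i) =
      (if Suc i = j then w else bs D (Suc (Suc i)) (min_fpath D list_order j w ! Suc i))"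
    by auto
qed

text \<open>The image of a non-maximal path: the first non-maximal edge is replaced by its
  successor f and everything below it by the minimal path into the source of f.\<close>

definition restart :: "nat \<Rightarrow> 'b \<Rightarrow> (nat \<Rightarrow> 'b) \<Rightarrow> nat \<Rightarrow> 'b" where
  "restart j f x = (\<lambda>i. if i < j then min_fpath D list_order j (bs D (Suc j) f) ! i
     else if i = j then f else x i)"

lemma restart:
  assumes x: "x \<in> path_space D" and f: "f \<in> bE D (Suc j)" "br D (Suc j) f = br D (Suc j) (x j)"
  shows "restart j f x \<in> path_space D" and "position j (restart j f x) = 0"
proof -
  note q = min_fpath_nth[OF source_in_level[OF f(1)]]
  have "restart j f x i \<in> bE D (Suc i)" for i
    using q(2) f path_space_edge[OF x] unfolding restart_def by auto
  moreover have "br D (Suc i) (restart j f x i) = bs D (Suc (Suc i)) (restart j f x (Suc i))" for i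
  proof -
    consider "Suc i < j" | "Suc i = j" | "i = j" | "j < i" by linarith
    then show ?thesis
      by cases (use q(4)[of i] f path_space_link[OF x, of i] in \<open>simp_all add: restart_def\<close>)
  qed
  ultimately show "restart j f x \<in> path_space D"
    unfolding path_space_def by blast
  show "position j (restart j f x) = 0"
    unfolding position_def offset_def restart_def using q(3) by simp
qed

text \<open>Below its first non-maximal edge x sits on the top floor of its level-j subtower; the
  successor edge takes it to the bottom floor of the next subtower, one floor higher.\<close>

lemma vershik_position_Suc:
  assumes x: "x \<in> path_space D" and less: "Suc (position k x) < tower_height k (path_vertex k x)"
  shows "vershik D list_order x \<in> path_space D" "\<forall>i\<ge>k. vershik D list_order x i = x i"
    and "position k (vershik D list_order x) = Suc (position k x)"
proof -
  let ?T = "vershik D list_order"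
  have "\<exists>i<k. \<not> is_max_edge D list_order (Suc i) (x i)"
    using position_bound(2)[OF x, of k] less by auto
  then obtain i0 where i0: "i0 < k" "\<not> is_max_edge D list_order (Suc i0) (x i0)"
    by blast
  define j where "j = (LEAST i. \<not> is_max_edge D list_order (Suc i) (x i))"
  have "j \<le> i0"
    unfolding j_def by (rule Least_le) (rule i0(2))
  then have j: "j < k" "\<not> is_max_edge D list_order (Suc j) (x j)"
    using i0 LeastI[of "\<lambda>i. \<not> is_max_edge D list_order (Suc i) (x i)" i0] unfolding j_def by auto
  have below: "\<forall>i<j. is_max_edge D list_order (Suc i) (x i)"
    unfolding j_def using not_less_Least by blast
  define e where "e = x j"
  have e: "e \<in> bE D (Suc j)"
    unfolding e_def using path_space_edge[OF x] .
  let ?v = "br D (Suc j) e" and ?i = "edge_index (Suc j) e"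
  have si: "Suc ?i < length (L (Suc j) ?v)"
    using is_max_edge_iff[OF e] j(2) edge_index(1)[OF e] unfolding e_def by linarith
  define f where "f = L (Suc j) ?v ! Suc ?i"
  have f: "f \<in> bE D (Suc j)" "br D (Suc j) f = br D (Suc j) (x j)"
    using nth_L[OF range_in_level[OF e] si] unfolding f_def e_def by auto
  have Tx: "?T x = restart j f x"
    using j(2) succ_edge_eq[OF e si]
    unfolding vershik_def restart_def max_path_def Let_def j_def[symmetric] f_def e_def by auto
  show "?T x \<in> path_space D"
    using restart(1)[OF x f] Tx by simp
  show "\<forall>i\<ge>k. ?T x i = x i"
    using Tx j(1) unfolding restart_def by auto
  have "Suc (position j x) = tower_height j (path_vertex j x)"
    using position_bound(2)[OF x, of j] below by simp
  then have "position (Suc j) (?T x) = Suc (position (Suc j) x)"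
    using Tx restart(2)[OF x f] offset_succ[OF e si] position_Suc
    unfolding f_def e_def path_vertex_def restart_def by simp
  moreover have "position k (?T x) + position (Suc j) x = position k x + position (Suc j) (?T x)"
    using j(1) Tx by (intro position_shift) (auto simp: restart_def)
  ultimately show "position k (?T x) = Suc (position k x)"
    by simp
qed

lemma funpow_vershik_position:
  assumes x: "x \<in> path_space D" and less: "position k x + n < tower_height k (path_vertex k x)"
  shows "(vershik D list_order ^^ n) x \<in> path_space D"
    and "\<forall>i\<ge>k. (vershik D list_order ^^ n) x i = x i"
    and "position k ((vershik D list_order ^^ n) x) = position k x + n"
proof -
  have "(vershik D list_order ^^ n) x \<in> path_space D \<and> (\<forall>i\<ge>k. (vershik D list_order ^^ n) x i = x i) \<and>
      position k ((vershik D list_order ^^ n) x) = position k x + n"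
    using less
  proof (induction n)
    case (Suc n)
    let ?z = "(vershik D list_order ^^ n) x"
    have IH: "?z \<in> path_space D" "\<forall>i\<ge>k. ?z i = x i" "position k ?z = position k x + n"
      using Suc by simp_all
    then have "Suc (position k ?z) < tower_height k (path_vertex k ?z)"
      using Suc.prems unfolding path_vertex_def by simp
    then show ?case
      using vershik_position_Suc[of ?z k] IH by simp
  qed (use x in simp)
  then show "(vershik D list_order ^^ n) x \<in> path_space D"
    and "\<forall>i\<ge>k. (vershik D list_order ^^ n) x i = x i"
    and "position k ((vershik D list_order ^^ n) x) = position k x + n"
    by auto
qed

end

lemma path_topology_cylinder_neighbourhood:
  assumes "openin (path_topology B) U" "x \<in> U"
  shows "x \<in> path_space B" "\<exists>N. \<forall>y\<in>path_space B. (\<forall>i<N. y i = x i) \<longrightarrow> y \<in> U"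
proof -
  have "generate_topology_on (range (cylinder B)) U"
    using assms(1) unfolding path_topology_def openin_topology_generated_by_iff .
  then have "x \<in> path_space B \<and> (\<exists>N. \<forall>y\<in>path_space B. (\<forall>i<N. y i = x i) \<longrightarrow> y \<in> U)"
    using assms(2)
  proof (induction arbitrary: x rule: generate_topology_on.induct)
    case (Int a b)
    obtain N1 N2 where "\<forall>y\<in>path_space B. (\<forall>i<N1. y i = x i) \<longrightarrow> y \<in> a"
      "\<forall>y\<in>path_space B. (\<forall>i<N2. y i = x i) \<longrightarrow> y \<in> b" "x \<in> path_space B"
      using Int.IH(1)[of x] Int.IH(2)[of x] Int.prems by blast
    then show ?case
      by (intro conjI exI[of _ "max N1 N2"]) auto
  next
    case (UN K)
    then obtain k where "k \<in> K" "x \<in> k"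
      by blast
    then show ?case
      using UN.IH[of k x] by blast
  next
    case (Basis s)
    then obtain p where "s = cylinder B p"
      by blast
    then show ?case
      using Basis.prems unfolding cylinder_def by (intro conjI exI[of _ "length p"]) auto
  qed simp
  then show "x \<in> path_space B" "\<exists>N. \<forall>y\<in>path_space B. (\<forall>i<N. y i = x i) \<longrightarrow> y \<in> U"
    by auto
qed

lemma prod_path_topology_cylinder_neighbourhood:
  assumes "openin (prod_topology (path_topology B) (path_topology B)) U" "(x1, x2) \<in> U"
  obtains N where "x1 \<in> path_space B" "x2 \<in> path_space B"
    and "\<And>y1 y2. y1 \<in> path_space B \<Longrightarrow> y2 \<in> path_space B \<Longrightarrow> \<forall>i<N. y1 i = x1 i \<Longrightarrow>
      \<forall>i<N. y2 i = x2 i \<Longrightarrow> (y1, y2) \<in> U"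
proof -
  obtain U1 U2 where U: "openin (path_topology B) U1" "openin (path_topology B) U2"
    "x1 \<in> U1" "x2 \<in> U2" "U1 \<times> U2 \<subseteq> U"
    using assms(1)[unfolded openin_prod_topology_alt, rule_format, OF assms(2)] by blast
  obtain N1 N2 where N1: "\<forall>y\<in>path_space B. (\<forall>i<N1. y i = x1 i) \<longrightarrow> y \<in> U1"
    and N2: "\<forall>y\<in>path_space B. (\<forall>i<N2. y i = x2 i) \<longrightarrow> y \<in> U2"
    using path_topology_cylinder_neighbourhood(2)[OF U(1,3)]
      path_topology_cylinder_neighbourhood(2)[OF U(2,4)] by blast
  show thesis
  proof (rule that[of "max N1 N2"])
    show "x1 \<in> path_space B" "x2 \<in> path_space B"
      using path_topology_cylinder_neighbourhood(1) U(1-4) by blast+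
    fix y1 y2 assume "y1 \<in> path_space B" "y2 \<in> path_space B"
      "\<forall>i<max N1 N2. y1 i = x1 i" "\<forall>i<max N1 N2. y2 i = x2 i"
    then have "y1 \<in> U1" "y2 \<in> U2"
      using N1 N2 by auto
    then show "(y1, y2) \<in> U"
      using U(5) by blast
  qed
qed

lemma funpow_map_prod:
  fixes T :: "'a \<Rightarrow> 'a"
  shows "((\<lambda>(x, y). (T x, T y)) ^^ n) (x, y) = ((T ^^ n) x, (T ^^ n) y)"
  by (induction n) simp_all

context list_ordered
begin

section \<open>Weak mixing\<close>

definition anchor_edge :: "nat \<Rightarrow> 'a \<Rightarrow> 'b" where
  "anchor_edge k v = (SOME g. g \<in> bE D (Suc k) \<and> bs D (Suc k) g = v \<and> br D (Suc k) g = c (Suc k))"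

lemma anchor_edge:
  assumes "v \<in> bV D k"
  shows "anchor_edge k v \<in> bE D (Suc k)" "bs D (Suc k) (anchor_edge k v) = v"
    and "br D (Suc k) (anchor_edge k v) = c (Suc k)"
proof -
  have "\<exists>g. g \<in> bE D (Suc k) \<and> bs D (Suc k) g = v \<and> br D (Suc k) g = c (Suc k)"
    using positive assms c_in_level unfolding positive_incidence_def by blast
  then show "anchor_edge k v \<in> bE D (Suc k)" "bs D (Suc k) (anchor_edge k v) = v"
    and "br D (Suc k) (anchor_edge k v) = c (Suc k)"
    unfolding anchor_edge_def by (metis (mono_tags, lifting) someI_ex)+
qed

text \<open>The anchor edge at level m + 1 leads from the range of e into the maximal path.\<close>

definition splice :: "(nat \<Rightarrow> 'b) \<Rightarrow> 'b \<Rightarrow> nat \<Rightarrow> nat \<Rightarrow> 'b" where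
  "splice x e m = (\<lambda>i. if i < m then x i else if i = m then e
     else if i = Suc m then anchor_edge (Suc m) (br D (Suc m) e) else xmax i)"

lemma splice:
  assumes x: "x \<in> path_space D" and e: "e \<in> bE D (Suc m)" "bs D (Suc m) e = path_vertex m x"
  shows "splice x e m \<in> path_space D" "\<forall>i<m. splice x e m i = x i"
    and "position (Suc m) (splice x e m) = position m x + offset m e"
    and "path_vertex (Suc m) (splice x e m) = br D (Suc m) e"
proof -
  note g = anchor_edge[OF range_in_level[OF e(1)]]
  have xmax: "xmax \<in> path_space D" "bs D (Suc (Suc i)) (xmax (Suc i)) = c (Suc i)" for i
    using max_path_xmax source_last_L c_in_level unfolding max_path_def xmax_def by auto
  have "splice x e m i \<in> bE D (Suc i)" for i
    using path_space_edge[OF x, of i] e g path_space_edge[OF xmax(1), of i]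
    unfolding splice_def by auto
  moreover have "br D (Suc i) (splice x e m i) = bs D (Suc (Suc i)) (splice x e m (Suc i))" for i
  proof -
    consider "Suc i < m" | "Suc i = m" | "i = m" | "i = Suc m" | "Suc m < i"
      by linarith
    then show ?thesis
      by cases (use path_space_link[OF x, of i] e g xmax(2)[of "Suc m"]
          path_space_link[OF xmax(1), of i] in \<open>auto simp: splice_def path_vertex_def\<close>)
  qed
  ultimately show "splice x e m \<in> path_space D"
    unfolding path_space_def by blast
  show "\<forall>i<m. splice x e m i = x i"
    unfolding splice_def by simp
  show "position (Suc m) (splice x e m) = position m x + offset m e"
    using position_Suc[of m "splice x e m"] position_cong[of m "splice x e m" x]
    unfolding splice_def by simp
  show "path_vertex (Suc m) (splice x e m) = br D (Suc m) e"
    using g unfolding path_vertex_def splice_def by simp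
qed

lemma funpow_vershik_splice:
  assumes a: "a \<in> path_space D" and b: "b \<in> path_space D"
    and e: "e \<in> fibre D (Suc m) z" "bs D (Suc m) e = path_vertex m a"
    and e': "e' \<in> fibre D (Suc m) z" "bs D (Suc m) e' = path_vertex m b"
    and n: "offset m e' + position m b = offset m e + position m a + n"
  shows "(vershik D list_order ^^ n) (splice a e m) = splice b e' m"
proof -
  let ?x = "splice a e m" and ?y = "splice b e' m"
  have E: "e \<in> bE D (Suc m)" "br D (Suc m) e = z" "e' \<in> bE D (Suc m)" "br D (Suc m) e' = z"
    using e(1) e'(1) unfolding fibre_def by auto
  note x = splice[OF a E(1) e(2)] and y = splice[OF b E(3) e'(2)]
  have pos: "position (Suc m) ?y = position (Suc m) ?x + n"
    using x(3) y(3) n by simp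
  have "position (Suc m) ?x + n < tower_height (Suc m) (path_vertex (Suc m) ?x)"
    using position_bound(1)[OF y(1), of "Suc m"] pos x(4) y(4) E by simp
  note T = funpow_vershik_position[OF x(1) this]
  show ?thesis
  proof (rule path_eq_if_position_eq[OF T(1) y(1)])
    show "\<forall>i\<ge>Suc m. (vershik D list_order ^^ n) ?x i = ?y i"
      using T(2) E unfolding splice_def by auto
    show "position (Suc m) ((vershik D list_order ^^ n) ?x) = position (Suc m) ?y"
      using T(3) pos by simp
  qed
qed

definition gap_fibre :: "nat \<Rightarrow> nat \<Rightarrow> nat \<Rightarrow> 'a \<Rightarrow> bool" where
  "gap_fibre m G W z \<longleftrightarrow> (\<forall>v\<in>bV D m. \<forall>w\<in>bV D m. \<forall>d. G \<le> d \<and> d \<le> G + W \<longrightarrow>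
     (\<exists>e\<in>fibre D (Suc m) z. \<exists>e'\<in>fibre D (Suc m) z. bs D (Suc m) e = v \<and> bs D (Suc m) e' = w \<and>
        offset m e' = offset m e + d))"

text \<open>Splice a1, a2, b1, b2 into one fibre at level m so that the offset gaps d1, d2 satisfy
  d1 + j1 - i1 = n = d2 + j2 - i2, where i, j are the positions at level m; then n iterations
  move both spliced a-points to the spliced b-points. The window of width 4H leaves room for
  both gaps.\<close>

lemma splices_common_iterate:
  assumes a: "a1 \<in> path_space D" "a2 \<in> path_space D" and b: "b1 \<in> path_space D" "b2 \<in> path_space D"
    and H: "\<forall>v\<in>bV D m. tower_height m v \<le> H" and gap: "gap_fibre m G (4 * H) z"
  obtains n e1 e2 e1' e2' where "0 < n"
    and "e1 \<in> bE D (Suc m)" "bs D (Suc m) e1 = path_vertex m a1"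
    and "e2 \<in> bE D (Suc m)" "bs D (Suc m) e2 = path_vertex m a2"
    and "e1' \<in> bE D (Suc m)" "bs D (Suc m) e1' = path_vertex m b1"
    and "e2' \<in> bE D (Suc m)" "bs D (Suc m) e2' = path_vertex m b2"
    and "(vershik D list_order ^^ n) (splice a1 e1 m) = splice b1 e1' m"
    and "(vershik D list_order ^^ n) (splice a2 e2 m) = splice b2 e2' m"
proof -
  have pos: "position m x < H" if "x \<in> path_space D" for x
  proof -
    have "tower_height m (path_vertex m x) \<le> H"
      using H path_vertex_in_level[OF that] by blast
    then show ?thesis
      using position_bound(1)[OF that, of m] by linarith
  qed
  note pos_a = pos[OF a(1)] pos[OF a(2)] and pos_b = pos[OF b(1)] pos[OF b(2)]
  define n where "n = G + 2 * H + position m b1 - position m a1"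
  define d2 where "d2 = n + position m a2 - position m b2"
  have "G \<le> G + 2 * H \<and> G + 2 * H \<le> G + 4 * H" "G \<le> d2 \<and> d2 \<le> G + 4 * H"
    using pos_a pos_b unfolding d2_def n_def by arith+
  then obtain e1 e1' e2 e2' where
    e1: "e1 \<in> fibre D (Suc m) z" "bs D (Suc m) e1 = path_vertex m a1"
      "e1' \<in> fibre D (Suc m) z" "bs D (Suc m) e1' = path_vertex m b1"
      "offset m e1' = offset m e1 + (G + 2 * H)"
    and e2: "e2 \<in> fibre D (Suc m) z" "bs D (Suc m) e2 = path_vertex m a2"
      "e2' \<in> fibre D (Suc m) z" "bs D (Suc m) e2' = path_vertex m b2" "offset m e2' = offset m e2 + d2"
    using gap path_vertex_in_level[OF a(1)] path_vertex_in_level[OF a(2)]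
      path_vertex_in_level[OF b(1)] path_vertex_in_level[OF b(2)]
    unfolding gap_fibre_def by meson
  have "offset m e1' + position m b1 = offset m e1 + position m a1 + n"
    "offset m e2' + position m b2 = offset m e2 + position m a2 + n"
    using e1(5) e2(5) pos_a pos_b unfolding d2_def n_def by arith+
  then have "(vershik D list_order ^^ n) (splice a1 e1 m) = splice b1 e1' m"
    "(vershik D list_order ^^ n) (splice a2 e2 m) = splice b2 e2' m"
    using funpow_vershik_splice[OF a(1) b(1) e1(1-4)] funpow_vershik_splice[OF a(2) b(2) e2(1-4)]
    by blast+
  moreover have "0 < n"
    using pos_a unfolding n_def by arith
  ultimately show thesis
    using that e1 e2 unfolding fibre_def by blast
qed

lemma weakly_mixing_if_gap_fibres:
  assumes gaps: "\<And>m. \<exists>H G z. (\<forall>v\<in>bV D m. tower_height m v \<le> H) \<and> gap_fibre m G (4 * H) z"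
  shows "weakly_mixing (path_topology D) (vershik D list_order)"
  unfolding weakly_mixing_def top_transitive_def
proof (intro allI impI)
  let ?T = "vershik D list_order" and ?X = "prod_topology (path_topology D) (path_topology D)"
  fix U W assume "openin ?X U \<and> openin ?X W \<and> U \<noteq> {} \<and> W \<noteq> {}"
  then obtain a1 a2 b1 b2 where UW: "openin ?X U" "(a1, a2) \<in> U" "openin ?X W" "(b1, b2) \<in> W"
    by auto
  obtain NU where a: "a1 \<in> path_space D" "a2 \<in> path_space D" and NU: "\<And>y1 y2.
    y1 \<in> path_space D \<Longrightarrow> y2 \<in> path_space D \<Longrightarrow> \<forall>i<NU. y1 i = a1 i \<Longrightarrow> \<forall>i<NU. y2 i = a2 i \<Longrightarrow>
    (y1, y2) \<in> U"
    using prod_path_topology_cylinder_neighbourhood[OF UW(1,2)] by blast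
  obtain NW where b: "b1 \<in> path_space D" "b2 \<in> path_space D" and NW: "\<And>y1 y2.
    y1 \<in> path_space D \<Longrightarrow> y2 \<in> path_space D \<Longrightarrow> \<forall>i<NW. y1 i = b1 i \<Longrightarrow> \<forall>i<NW. y2 i = b2 i \<Longrightarrow>
    (y1, y2) \<in> W"
    using prod_path_topology_cylinder_neighbourhood[OF UW(3,4)] by blast
  define m where "m = NU + NW"
  obtain H G z where H: "\<forall>v\<in>bV D m. tower_height m v \<le> H" and gap: "gap_fibre m G (4 * H) z"
    using gaps by blast
  obtain n e1 e2 e1' e2' where n: "0 < n"
    and e: "e1 \<in> bE D (Suc m)" "bs D (Suc m) e1 = path_vertex m a1"
      "e2 \<in> bE D (Suc m)" "bs D (Suc m) e2 = path_vertex m a2"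
      "e1' \<in> bE D (Suc m)" "bs D (Suc m) e1' = path_vertex m b1"
      "e2' \<in> bE D (Suc m)" "bs D (Suc m) e2' = path_vertex m b2"
    and T: "(?T ^^ n) (splice a1 e1 m) = splice b1 e1' m" "(?T ^^ n) (splice a2 e2 m) = splice b2 e2' m"
    using splices_common_iterate[OF a b H gap] by blast
  have "(splice a1 e1 m, splice a2 e2 m) \<in> U"
    using NU splice(1,2)[OF a(1) e(1,2)] splice(1,2)[OF a(2) e(3,4)] unfolding m_def by simp
  moreover have "(splice b1 e1' m, splice b2 e2' m) \<in> W"
    using NW splice(1,2)[OF b(1) e(5,6)] splice(1,2)[OF b(2) e(7,8)] unfolding m_def by simp
  moreover have "((\<lambda>(x, y). (?T x, ?T y)) ^^ n) (splice a1 e1 m, splice a2 e2 m) =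
      (splice b1 e1' m, splice b2 e2' m)"
    using T by (simp add: funpow_map_prod)
  ultimately show "\<exists>n>0. ((\<lambda>(x, y). (?T x, ?T y)) ^^ n) ` U \<inter> W \<noteq> {}"
    using n by (metis (no_types, lifting) IntI empty_iff image_eqI)
qed

lemma max_path_if_singleton_fibres:
  assumes "\<And>k v. v \<in> bV D (Suc k) \<Longrightarrow> length (L (Suc k) v) = 1" "x \<in> path_space D"
  shows "max_path D list_order x"
  unfolding max_path_def
proof (intro conjI allI)
  fix i
  have e: "x i \<in> bE D (Suc i)"
    using path_space_edge[OF assms(2)] .
  then show "is_max_edge D list_order (Suc i) (x i)"
    using is_max_edge_iff[OF e] edge_index(1)[OF e] assms(1)[OF range_in_level[OF e]] by simp
qed (rule assms(2))

lemma weakly_mixing_if_singleton_fibres: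
  assumes "\<And>k v. v \<in> bV D (Suc k) \<Longrightarrow> length (L (Suc k) v) = 1"
  shows "weakly_mixing (path_topology D) (vershik D list_order)"
  unfolding weakly_mixing_def top_transitive_def
proof (intro allI impI)
  let ?T = "vershik D list_order" and ?X = "prod_topology (path_topology D) (path_topology D)"
  have single: "x = xmax" if "x \<in> path_space D" for x
    using max_path_if_singleton_fibres[OF assms that] max_path_unique by blast
  then have "xmin = xmax"
    using min_path_xmin unfolding min_path_def by blast
  moreover have "(THE y. min_path D list_order y) = xmin"
    using min_path_xmin min_path_unique by (rule the_equality)
  ultimately have T: "?T xmax = xmax"
    unfolding vershik_def using max_path_xmax by simp
  have xmax: "(xmax, xmax) \<in> V" if V: "openin ?X V" "V \<noteq> {}" for V
  proof -
    obtain y1 y2 where y: "(y1, y2) \<in> V"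
      using V(2) by auto
    have "y1 \<in> path_space D \<and> y2 \<in> path_space D"
      by (rule prod_path_topology_cylinder_neighbourhood[OF V(1) y]) simp
    then have "y1 = xmax" "y2 = xmax"
      using single by blast+
    then show ?thesis
      using y by simp
  qed
  fix U W assume "openin ?X U \<and> openin ?X W \<and> U \<noteq> {} \<and> W \<noteq> {}"
  then have U: "(xmax, xmax) \<in> U" and W: "(xmax, xmax) \<in> W"
    using xmax by auto
  have "((\<lambda>(x, y). (?T x, ?T y)) ^^ 1) (xmax, xmax) = (xmax, xmax)"
    using T by simp
  then have "(xmax, xmax) \<in> ((\<lambda>(x, y). (?T x, ?T y)) ^^ 1) ` U"
    using U by (rule image_eqI[OF sym])
  then have "(xmax, xmax) \<in> ((\<lambda>(x, y). (?T x, ?T y)) ^^ 1) ` U \<inter> W"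
    using W by (rule IntI)
  then show "\<exists>n>0. ((\<lambda>(x, y). (?T x, ?T y)) ^^ n) ` U \<inter> W \<noteq> {}"
    using zero_less_one by blast
qed

end

context list_ordered
begin

lemma offset_nth_L:
  assumes "v \<in> bV D (Suc k)" "i < length (L (Suc k) v)"
  shows "offset k (L (Suc k) v ! i) = sum_list (map (tower_height k) (take i (map (bs D (Suc k)) (L (Suc k) v))))"
  using nth_L[OF assms] unfolding offset_def by (simp add: take_map o_def)

lemma gap_fibre_if_gap_pattern:
  assumes z: "z \<in> bV D (Suc m)" and S: "map (bs D (Suc m)) (L (Suc m) z) = A @ P @ C"
    and P: "gap_pattern (tower_height m) (bV D m) G W P"
  shows "gap_fibre m G W z"
  unfolding gap_fibre_def
proof (intro ballI allI impI)
  fix v w d assume "v \<in> bV D m" "w \<in> bV D m" "G \<le> d \<and> d \<le> G + W"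
  then obtain r r' where r: "r < r'" "r' < length P" "P ! r = v" "P ! r' = w"
    and sum: "sum_list (map (tower_height m) (take r' P)) = sum_list (map (tower_height m) (take r P)) + d"
    using P unfolding gap_pattern_def by blast
  let ?e = "L (Suc m) z ! (length A + r)" and ?e' = "L (Suc m) z ! (length A + r')"
  have len: "length A + r < length (L (Suc m) z)" "length A + r' < length (L (Suc m) z)"
    using r arg_cong[OF S, of length] by auto
  have "?e \<in> fibre D (Suc m) z" "?e' \<in> fibre D (Suc m) z"
    using nth_L[OF z len(1)] nth_L[OF z len(2)] unfolding fibre_def by auto
  moreover have "bs D (Suc m) ?e = v" "bs D (Suc m) ?e' = w"
    using nth_map[OF len(1), of "bs D (Suc m)", unfolded S] nth_map[OF len(2), of "bs D (Suc m)", unfolded S]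
      r by (simp_all add: nth_append)
  moreover have "offset m ?e' = offset m ?e + d"
    using offset_nth_L[OF z len(1)] offset_nth_L[OF z len(2)] S sum r by simp
  ultimately show "\<exists>e\<in>fibre D (Suc m) z. \<exists>e'\<in>fibre D (Suc m) z. bs D (Suc m) e = v \<and>
      bs D (Suc m) e' = w \<and> offset m e' = offset m e + d"
    by blast
qed

end

section \<open>Telescopings\<close>

locale telescoped = bratteli_diagram +
  fixes n :: "nat \<Rightarrow> nat"
  assumes n_telescoping: "is_telescoping_seq n"
begin

lemma n_0: "n 0 = 0"
  and n_less: "n m < n (Suc m)"
  and n_mono: "k \<le> m \<Longrightarrow> n k \<le> n m"
  using n_telescoping unfolding is_telescoping_seq_def by (auto simp: strict_mono_Suc_iff strict_mono_less_eq)

lemma telescope_simps: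
  "bV (telescope B n) k = bV B (n k)"
  "bE (telescope B n) (Suc m) = {q. fpath B (n m) (n (Suc m)) q}"
  "bs (telescope B n) (Suc m) q = bs B (Suc (n m)) (hd q)"
  "br (telescope B n) (Suc m) q = br B (n (Suc m)) (last q)"
  by (simp_all add: telescope_def)

lemma bratteli_telescope: "bratteli (telescope B n)"
  unfolding bratteli_def
proof (intro conjI allI ballI)
  show "\<exists>v0. bV (telescope B n) 0 = {v0}"
    using bratteli n_0 unfolding bratteli_def telescope_simps by simp
  fix k
  show "finite (bV (telescope B n) k)" "bV (telescope B n) k \<noteq> {}"
    using finite_level level_nonempty unfolding telescope_simps by auto
  show "bE (telescope B n) 0 = {}"
    by (simp add: telescope_def)
  show "finite (bE (telescope B n) k)"
    by (cases k) (simp_all add: telescope_def finite_fpaths)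
next
  fix k e assume "e \<in> bE (telescope B n) (Suc k)"
  then show "bs (telescope B n) (Suc k) e \<in> bV (telescope B n) k"
    and "br (telescope B n) (Suc k) e \<in> bV (telescope B n) (Suc k)"
    unfolding telescope_simps using fpath_source fpath_range by auto
qed

sublocale telescope: bratteli_diagram "telescope B n"
  by unfold_locales (rule bratteli_telescope)

lemma fibre_telescope: "fibre (telescope B n) (Suc m) y = paths_into (n m) (n (Suc m)) y"
  unfolding fibre_def paths_into_def telescope_simps by simp

lemma push_telescope:
  assumes "k \<le> m" "v \<in> bV B (n m)"
  shows "push (telescope B n) k m a v = push B (n k) (n m) a v"
  using assms
proof (induction m arbitrary: v)
  case (Suc m)
  show ?case
  proof (cases "k = Suc m")
    case False
    then have "k \<le> m" using Suc.prems by simp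
    have "push (telescope B n) k (Suc m) a v =
        (\<Sum>q\<in>paths_into (n m) (n (Suc m)) v. push B (n k) (n m) a (bs B (Suc (n m)) (hd q)))"
      using \<open>k \<le> m\<close> by (auto simp: telescope.push_Suc fibre_telescope telescope_simps paths_into_def
          fpath_source Suc.IH intro!: sum.cong)
    also have "\<dots> = push B (n m) (n (Suc m)) (push B (n k) (n m) a) v"
      using push_eq_sum_paths[OF n_less] by simp
    also have "\<dots> = push B (n k) (n (Suc m)) a v"
      using push_push[of "n k" "n m" "n (Suc m)" v a] Suc.prems n_mono[OF \<open>k \<le> m\<close>] n_less
      by (simp add: less_imp_le)
    finally show ?thesis .
  qed simp
qed simp

lemma height_telescope: "v \<in> bV B (n m) \<Longrightarrow> telescope.height m v = height (n m) v"
  unfolding telescope.height_def height_def using push_telescope[of 0 m v] n_0 by simp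

lemma card_fibre_telescope:
  assumes "y \<in> bV B (n (Suc m))"
  shows "int (card {e\<in>fibre (telescope B n) (Suc m) y. bs (telescope B n) (Suc m) e = u}) =
    push B (n m) (n (Suc m)) (delta u) y"
  unfolding fibre_telescope telescope_simps using push_delta_eq_card[OF n_less] by simp

lemma positive_incidence_telescope:
  assumes "\<And>m u y. u \<in> bV B (n m) \<Longrightarrow> y \<in> bV B (n (Suc m)) \<Longrightarrow> 1 \<le> push B (n m) (n (Suc m)) (delta u) y"
  shows "positive_incidence (telescope B n)"
  unfolding positive_incidence_def
proof (intro allI ballI)
  fix m u y assume "u \<in> bV (telescope B n) m" "y \<in> bV (telescope B n) (Suc m)"
  then have "1 \<le> int (card {e\<in>fibre (telescope B n) (Suc m) y. bs (telescope B n) (Suc m) e = u})"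
    using assms[of u m y] card_fibre_telescope[of y m u] unfolding telescope_simps(1) by simp
  then have "0 < card {e\<in>fibre (telescope B n) (Suc m) y. bs (telescope B n) (Suc m) e = u}"
    by simp
  then show "\<exists>e\<in>bE (telescope B n) (Suc m). bs (telescope B n) (Suc m) e = u \<and> br (telescope B n) (Suc m) e = y"
    unfolding fibre_def by (auto simp: card_gt_0_iff)
qed

lemma list_ordered_telescope:
  assumes c: "\<And>m. c m \<in> bV B (n m)"
    and S: "\<And>m y. y \<in> bV B (n (Suc m)) \<Longrightarrow> S m y \<noteq> [] \<and> hd (S m y) = c m \<and> last (S m y) = c m \<and>
      (\<forall>u. int (count (mset (S m y)) u) = push B (n m) (n (Suc m)) (delta u) y)"
    and pos: "positive_incidence (telescope B n)"
  obtains L where "list_ordered (telescope B n) L c"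
    and "\<And>m y. y \<in> bV B (n (Suc m)) \<Longrightarrow> map (bs (telescope B n) (Suc m)) (L (Suc m) y) = S m y"
proof -
  let ?D = "telescope B n"
  define L where "L = (\<lambda>k y. case k of 0 \<Rightarrow> [] | Suc m \<Rightarrow>
    (SOME Ls. distinct Ls \<and> set Ls = fibre ?D (Suc m) y \<and> map (bs ?D (Suc m)) Ls = S m y))"
  have L: "distinct (L (Suc m) y) \<and> set (L (Suc m) y) = fibre ?D (Suc m) y \<and>
      map (bs ?D (Suc m)) (L (Suc m) y) = S m y" if y: "y \<in> bV B (n (Suc m))" for m y
  proof -
    have "int (count (mset (S m y)) u) = int (card {e\<in>fibre ?D (Suc m) y. bs ?D (Suc m) e = u})" for u
      using S[OF y] card_fibre_telescope[OF y, of u] by simp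
    then have "\<forall>u. count (mset (S m y)) u = card {e\<in>fibre ?D (Suc m) y. bs ?D (Suc m) e = u}"
      by (simp only: of_nat_eq_iff) blast
    then have "\<exists>Ls. distinct Ls \<and> set Ls = fibre ?D (Suc m) y \<and> map (bs ?D (Suc m)) Ls = S m y"
      by (rule exists_distinct_list_map_eq[OF telescope.finite_fibre])
    then show ?thesis
      unfolding L_def by (simp, rule someI_ex)
  qed
  have "list_ordered ?D L c"
  proof (unfold_locales, unfold telescope_simps(1))
    fix k v assume v: "v \<in> bV B (n (Suc k))"
    show "set (L (Suc k) v) = fibre ?D (Suc k) v" "distinct (L (Suc k) v)"
      using L[OF v] by auto
    have "L (Suc k) v \<noteq> []"
      using L[OF v] S[OF v] by auto
    then show "bs ?D (Suc k) (hd (L (Suc k) v)) = c k" "bs ?D (Suc k) (last (L (Suc k) v)) = c k"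
      using L[OF v] S[OF v] hd_map[of "L (Suc k) v" "bs ?D (Suc k)"] last_map[of "L (Suc k) v" "bs ?D (Suc k)"]
      by simp_all
  qed (use pos c in \<open>simp_all add: telescope_simps\<close>)
  then show thesis
    using that L by blast
qed

end

section \<open>Construction of the ordering\<close>

context bratteli_diagram
begin

lemma exists_source_list:
  assumes "k \<le> m" "c \<in> bV B k" "set P \<subseteq> bV B k" "w \<in> bV B m"
    and many: "\<And>u. u \<in> bV B k \<Longrightarrow> int (length P + 2) \<le> push B k m (delta u) w"
  obtains R where "\<forall>u. int (count (mset (c # P @ R @ [c])) u) = push B k m (delta u) w"
proof -
  define f where "f u = nat (push B k m (delta u) w)" for u
  have "count (mset (c # P @ [c])) u \<le> f u" for u
  proof (cases "u \<in> bV B k")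
    case True
    have "count (mset (c # P @ [c])) u \<le> length P + 2"
      using count_le_size[of "mset (c # P @ [c])" u] by simp
    then show ?thesis
      using many[OF True] unfolding f_def by linarith
  next
    case False
    then have "u \<notin> set P" "u \<noteq> c"
      using assms(2,3) by auto
    then have "count (mset (c # P @ [c])) u = 0"
      by (simp add: count_eq_zero_iff)
    then show ?thesis
      by simp
  qed
  moreover have "f u = 0" if "u \<notin> bV B k" for u
    unfolding f_def using push_delta_outside[OF that assms(1,4)] by simp
  ultimately obtain R where R: "\<forall>u. count (mset ((c # P @ [c]) @ R)) u = f u"
    using exists_list_count_eq[OF finite_level[of k], where f = f and P = "c # P @ [c]"] by blast
  have "0 \<le> push B k m (delta u) w" for u
    by (rule push_nonneg[OF assms(1) _ assms(4)]) (simp add: delta_nonneg)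
  then have "int (f u) = push B k m (delta u) w" for u
    unfolding f_def by simp
  then show thesis
    using R by (intro that[of R]) (simp add: add_ac)
qed

end

context telescoped
begin

lemma list_ordered_with_patterns:
  assumes c: "\<And>m. c m \<in> bV B (n m)" and P: "\<And>m. set (P m) \<subseteq> bV B (n m)"
    and many: "\<And>m u y. u \<in> bV B (n m) \<Longrightarrow> y \<in> bV B (n (Suc m)) \<Longrightarrow>
      int (length (P m) + 2) \<le> push B (n m) (n (Suc m)) (delta u) y"
  obtains L R where "list_ordered (telescope B n) L c"
    and "\<And>m y. y \<in> bV B (n (Suc m)) \<Longrightarrow>
      map (bs (telescope B n) (Suc m)) (L (Suc m) y) = [c m] @ P m @ R m y @ [c m]"
proof -
  define R where "R m y = (SOME R. \<forall>u. int (count (mset (c m # P m @ R @ [c m])) u) =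
    push B (n m) (n (Suc m)) (delta u) y)" for m y
  have R: "\<forall>u. int (count (mset (c m # P m @ R m y @ [c m])) u) = push B (n m) (n (Suc m)) (delta u) y"
    if y: "y \<in> bV B (n (Suc m))" for m y
  proof -
    obtain R' where "\<forall>u. int (count (mset (c m # P m @ R' @ [c m])) u) =
        push B (n m) (n (Suc m)) (delta u) y"
      using exists_source_list[OF less_imp_le[OF n_less] c P y many[OF _ y]] by blast
    then show ?thesis
      unfolding R_def by (rule someI)
  qed
  have "positive_incidence (telescope B n)"
  proof (rule positive_incidence_telescope)
    fix m u y assume "u \<in> bV B (n m)" "y \<in> bV B (n (Suc m))"
    then show "1 \<le> push B (n m) (n (Suc m)) (delta u) y"
      using many[of u m y] by linarith
  qed
  then obtain L where "list_ordered (telescope B n) L c"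
    and "\<And>m y. y \<in> bV B (n (Suc m)) \<Longrightarrow>
      map (bs (telescope B n) (Suc m)) (L (Suc m) y) = c m # P m @ R m y @ [c m]"
    using list_ordered_telescope[of c "\<lambda>m y. c m # P m @ R m y @ [c m]", OF c] R by auto
  then show thesis
    using that by simp
qed

lemma weakly_mixing_if_height_patterns:
  assumes L: "list_ordered (telescope B n) L c"
    and S: "\<And>m y. y \<in> bV B (n (Suc m)) \<Longrightarrow>
      map (bs (telescope B n) (Suc m)) (L (Suc m) y) = [c m] @ P m @ R m y @ [c m]"
    and pat: "\<And>m. gap_pattern (\<lambda>v. nat (height (n m) v)) (bV B (n m)) (G m)
      (4 * (\<Sum>v\<in>bV B (n m). nat (height (n m) v))) (P m)"
  shows "weakly_mixing (path_topology (telescope B n))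
    (vershik (telescope B n) (list_ordered.list_order (telescope B n) L))"
proof -
  interpret ordered: list_ordered "telescope B n" L c
    by (rule L)
  have tower: "ordered.tower_height m v = nat (height (n m) v)" if v: "v \<in> bV B (n m)" for m v
  proof -
    have "int (ordered.tower_height m v) = telescope.height m v"
      using ordered.int_tower_height v unfolding telescope_simps by blast
    then show ?thesis
      using height_telescope[OF v] by simp
  qed
  show ?thesis
  proof (rule ordered.weakly_mixing_if_gap_fibres)
    fix m
    define H where "H = (\<Sum>v\<in>bV B (n m). nat (height (n m) v))"
    obtain z where z: "z \<in> bV B (n (Suc m))"
      using level_nonempty by blast
    have "gap_pattern (ordered.tower_height m) (bV B (n m)) (G m) (4 * H) (P m)"
      using gap_pattern_cong[OF pat, of m "ordered.tower_height m"] tower[of _ m] unfolding H_def by simp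
    then have "ordered.gap_fibre m (G m) (4 * H) z"
      using ordered.gap_fibre_if_gap_pattern[of z m "[c m]" "P m" "R m z @ [c m]"] z S[OF z]
      unfolding telescope_simps by simp
    moreover have "ordered.tower_height m v \<le> H" if "v \<in> bV B (n m)" for v
      unfolding tower[OF that] H_def using that finite_level by (intro member_le_sum) auto
    ultimately show "\<exists>H G z. (\<forall>v\<in>bV (telescope B n) m. ordered.tower_height m v \<le> H) \<and>
        ordered.gap_fibre m G (4 * H) z"
      unfolding telescope_simps by blast
  qed
qed

end

context positive_telescoping
begin

lemma push_delta_if_heights_1:
  assumes one: "\<And>a v. v \<in> bV B (p a) \<Longrightarrow> height (p a) v = 1"
    and c: "c \<in> bV B (p a)" and y: "y \<in> bV B (p (Suc a))"
  shows "push B (p a) (p (Suc a)) (delta u) y = (if u = c then 1 else 0)"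
proof -
  have single: "bV B (p a) = {c}"
  proof -
    have "u = c" if u: "u \<in> bV B (p a)" for u
    proof (rule ccontr)
      assume "u \<noteq> c"
      then have "(\<Sum>u'\<in>{u, c}. height (p a) u') \<le> height (p (Suc a)) y"
        using height_sum_le[of a "Suc a" "{u, c}" y] u c y by simp
      then show False
        using one u c y \<open>u \<noteq> c\<close> by simp
    qed
    then show ?thesis
      using c by blast
  qed
  show ?thesis
  proof (cases "u = c")
    case True
    have "1 = height (p (Suc a)) y"
      using one y by simp
    also have "\<dots> = push B (p a) (p (Suc a)) (delta u) y"
      using push_height_decompose[OF p_le[of a "Suc a"] y] single one[OF c] True by simp
    finally show ?thesis
      using True by simp
  next
    case False
    then have "u \<notin> bV B (p a)"
      using single by auto
    then show ?thesis
      using push_delta_outside[OF _ p_le[of a "Suc a"] y] False by simp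
  qed
qed

text \<open>If all heights at the levels p a are 1, every such level is a single vertex joined to the
  next by a single path, so the path space is a point.\<close>

lemma weakly_mixing_ordering_if_heights_1:
  assumes one: "\<And>a v. v \<in> bV B (p a) \<Longrightarrow> height (p a) v = 1"
  shows "\<exists>n om. is_telescoping_seq n \<and> proper_ordering (telescope B n) om \<and>
    weakly_mixing (path_topology (telescope B n)) (vershik (telescope B n) om)"
proof -
  interpret telescoped B p
    by unfold_locales (rule p_telescoping)
  define c where "c a = (SOME v. v \<in> bV B (p a))" for a
  have c: "c a \<in> bV B (p a)" for a
    unfolding c_def using level_nonempty by (simp add: some_in_eq)
  have "[c m] \<noteq> [] \<and> hd [c m] = c m \<and> last [c m] = c m \<and>
      (\<forall>u. int (count (mset [c m]) u) = push B (p m) (p (Suc m)) (delta u) y)"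
    if "y \<in> bV B (p (Suc m))" for m y
    using push_delta_if_heights_1[OF one c that] by simp
  then obtain L where L: "list_ordered (telescope B p) L c"
    and S: "\<And>m y. y \<in> bV B (p (Suc m)) \<Longrightarrow> map (bs (telescope B p) (Suc m)) (L (Suc m) y) = [c m]"
    using list_ordered_telescope[of c "\<lambda>m y. [c m]", OF c _ p_positive] by blast
  have "length (L (Suc m) y) = 1" if "y \<in> bV (telescope B p) (Suc m)" for m y
    using arg_cong[where f = length, OF S] that unfolding telescope_simps by simp
  then show ?thesis
    using list_ordered.proper_ordering_list_order[OF L] list_ordered.weakly_mixing_if_singleton_fibres[OF L]
      p_telescoping by blast
qed

end

context trivial_rational_subgroup
begin

lemma exists_gap_pattern_height:
  "\<exists>G P. gap_pattern (\<lambda>v. nat (height (p a) v)) (bV B (p a)) G W P"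
proof (rule gap_pattern_exists[OF finite_level level_nonempty])
  have "(\<lambda>v. int (nat (height (p a) v))) ` bV B (p a) = height (p a) ` bV B (p a)"
    using height_pos by (intro image_cong) (auto intro: order_trans[OF zero_le_one])
  then show "Gcd ((\<lambda>v. int (nat (height (p a) v))) ` bV B (p a)) = 1"
    using Gcd_height by simp
qed (use height_pos in fastforce)

lemma exists_telescoping_many_paths:
  assumes "v0 \<in> bV B (p a0)" "2 \<le> height (p a0) v0"
  obtains \<sigma> where "\<sigma> 0 = 0" "\<And>m. \<sigma> m < \<sigma> (Suc m)"
    and "\<And>m u w. u \<in> bV B (p (\<sigma> m)) \<Longrightarrow> w \<in> bV B (p (\<sigma> (Suc m))) \<Longrightarrow>
      int (K (\<sigma> m)) \<le> push B (p (\<sigma> m)) (p (\<sigma> (Suc m))) (delta u) w"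
proof -
  define next_level where "next_level a = (SOME b. a < b \<and> (\<forall>u\<in>bV B (p a). \<forall>w\<in>bV B (p b).
    int (K a) \<le> push B (p a) (p b) (delta u) w))" for a
  have next_level: "a < next_level a \<and> (\<forall>u\<in>bV B (p a). \<forall>w\<in>bV B (p (next_level a)).
    int (K a) \<le> push B (p a) (p (next_level a)) (delta u) w)" for a
    unfolding next_level_def by (rule someI_ex) (meson many_paths_eventually[OF assms])
  define \<sigma> where "\<sigma> = rec_nat 0 (\<lambda>_ a. next_level a)"
  show thesis
    by (rule that[of \<sigma>]) (use next_level in \<open>simp_all add: \<sigma>_def\<close>)
qed

text \<open>Choose a telescoping so sparse that between consecutive levels every vertex is joined to
  every vertex by more paths than a gap pattern of the lower level has letters. The edges into
  each vertex are then ordered so that their sources read c, pattern, remaining sources, c.\<close>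

lemma weakly_mixing_ordering_if_height_ge_2:
  assumes "v0 \<in> bV B (p a0)" "2 \<le> height (p a0) v0"
  shows "\<exists>n om. is_telescoping_seq n \<and> proper_ordering (telescope B n) om \<and>
    weakly_mixing (path_topology (telescope B n)) (vershik (telescope B n) om)"
proof -
  define H where "H a = (\<Sum>v\<in>bV B (p a). nat (height (p a) v))" for a
  have "\<forall>a. \<exists>t. gap_pattern (\<lambda>v. nat (height (p a) v)) (bV B (p a)) (fst t) (4 * H a) (snd t)"
    using exists_gap_pattern_height by simp
  then obtain t where "\<forall>a. gap_pattern (\<lambda>v. nat (height (p a) v)) (bV B (p a)) (fst (t a)) (4 * H a) (snd (t a))"
    by (rule choice[THEN exE])
  then obtain G P where pat: "\<And>a. gap_pattern (\<lambda>v. nat (height (p a) v)) (bV B (p a)) (G a) (4 * H a) (P a)"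
    by (intro that[of "fst \<circ> t" "snd \<circ> t"]) auto
  obtain \<sigma> where \<sigma>: "\<sigma> 0 = 0" "\<And>m. \<sigma> m < \<sigma> (Suc m)"
    and many: "\<And>m u w. u \<in> bV B (p (\<sigma> m)) \<Longrightarrow> w \<in> bV B (p (\<sigma> (Suc m))) \<Longrightarrow>
      int (length (P (\<sigma> m)) + 2) \<le> push B (p (\<sigma> m)) (p (\<sigma> (Suc m))) (delta u) w"
    using exists_telescoping_many_paths[OF assms, of "\<lambda>a. length (P a) + 2"] by blast
  define n where "n m = p (\<sigma> m)" for m
  have "is_telescoping_seq n"
    unfolding is_telescoping_seq_def n_def strict_mono_Suc_iff using \<sigma> p_0 p_less by simp
  then interpret telescoped B n
    by unfold_locales
  define c where "c m = (SOME v. v \<in> bV B (n m))" for m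
  have c: "c m \<in> bV B (n m)" for m
    unfolding c_def using level_nonempty by (simp add: some_in_eq)
  have pat_n: "gap_pattern (\<lambda>v. nat (height (n m) v)) (bV B (n m)) (G (\<sigma> m))
      (4 * (\<Sum>v\<in>bV B (n m). nat (height (n m) v))) (P (\<sigma> m))" for m
    using pat unfolding n_def H_def .
  then have "set (P (\<sigma> m)) \<subseteq> bV B (n m)" for m
    unfolding gap_pattern_def by blast
  then obtain L R where L: "list_ordered (telescope B n) L c"
    and S: "\<And>m y. y \<in> bV B (n (Suc m)) \<Longrightarrow>
      map (bs (telescope B n) (Suc m)) (L (Suc m) y) = [c m] @ P (\<sigma> m) @ R m y @ [c m]"
    using list_ordered_with_patterns[OF c, of "\<lambda>m. P (\<sigma> m)"] many unfolding n_def by blast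
  show ?thesis
    using weakly_mixing_if_height_patterns[OF L S pat_n] list_ordered.proper_ordering_list_order[OF L]
      n_telescoping by blast
qed

end

theorem mainTheorem2:
  fixes B :: "('v, 'e) bdiag"
  assumes "simple_bratteli B"
    and "rational_subgroup B = int_multiples_of_unit B"
  shows "\<exists>n om. is_telescoping_seq n \<and> proper_ordering (telescope B n) om \<and>
           weakly_mixing (path_topology (telescope B n)) (vershik (telescope B n) om)"
proof -
  obtain p where "bratteli B" "is_telescoping_seq p" "positive_incidence (telescope B p)"
    using assms(1) unfolding simple_bratteli_def by blast
  then interpret trivial_rational_subgroup B p
    using assms(2) by unfold_locales
  show ?thesis
  proof (cases "\<exists>a v. v \<in> bV B (p a) \<and> 2 \<le> height (p a) v")
    case True
    then show ?thesis
      using weakly_mixing_ordering_if_height_ge_2 by blast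
  next
    case False
    then have "height (p a) v = 1" if "v \<in> bV B (p a)" for a v
      using height_pos[OF that] that by force
    then show ?thesis
      by (rule weakly_mixing_ordering_if_heights_1)
  qed
qed

end
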